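(* For $n>0$ and $J\subseteq S$, there are bijections $\mathfrak{S}_n^J(231)\simeq \mathrm{NC}_n^J\simeq \mathrm{NN}_n^J$. In particular these three sets have the same cardinality.
   Context: Let $\mathfrak{S}_n$ be the symmetric group on $[n]=\{1,\dots,n\}$, $s_i=(i,i+1)$, $S=\{s_1,\dots,s_{n-1}\}$, permutations written in one-line notation $w=w_1\cdots w_n$. The inversion set is $\mathrm{inv}(w)=\{(i,j):i<j,\ w_i>w_j\}$, and $u\le_S v$ iff $\mathrm{inv}(u)\subseteq\mathrm{inv}(v)$. For $J\subseteq S$, $\mathfrak{S}_n^J=\{w: w<_S ws \text{ for all } s\in J\}$ (concretely: $w_i<w_{i+1}$ whenever $s_i\in J$). Writing $J=S\setminus\{s_{j_1},\dots,s_{j_r}\}$ with $j_1<\dots<j_r$, the $J$-regions are the blocks $\{1,\dots,j_1\},\{j_1+1,\dots,j_2\},\dots,\{j_r+1,\dots,n\}$. An element $w\in\mathfrak{S}_n^J$ is $(J,231)$-avoiding if there are no indices $i<j<k$ in pairwise different $J$-regions with $w_k<w_i<w_j$ and $w_i=w_k+1$; $\mathfrak{S}_n^J(231)$ is the set of such elements. For a set partition $\mathbf P$ of $[n]$, a bump is a pair $(a,b)$, $a<b$, with $a,b$ in the same part and no element $c$ of that part with $a<c<b$. $\mathbf P$ is $J$-noncrossing if: (NC1) no two distinct elements of the same $J$-region lie in the same part; (NC2) whenever two distinct bumps $(i_1,i_2),(j_1,j_2)$ satisfy $i_1<j_1<i_2<j_2$, either $i_1,j_1$ lie in the same $J$-region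 or $i_2,j_1$ lie in the same $J$-region; (NC3) whenever two distinct bumps satisfy $i_1<j_1<j_2<i_2$, then $i_1$ and $j_1$ lie in different $J$-regions. $\mathrm{NC}_n^J$ is the set of $J$-noncrossing partitions. $\mathbf P$ is $J$-nonnesting if (NN1) no two distinct elements of the same $J$-region lie in the same part, and (NN2) there are no two distinct bumps $(i_1,i_2),(j_1,j_2)$ with $i_1<j_1<j_2<i_2$. $\mathrm{NN}_n^J$ is the set of $J$-nonnesting partitions. *)

theory Defs
  imports "HOL-Combinatorics.Permutations" "HOL-Library.Disjoint_Sets"
begin

text \<open>A subset J of S = {s_1,...,s_(n-1)} is encoded by its index set
  {i. s_i \<in> J} \<subseteq> {1..<n}. Permutations of [n] are functions
  w with w permutes {1..n}; w i is the i-th letter of the one-line notation.\<close>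

text \<open>J-region index of position i: number of cut points s_j \<notin> J with j < i.
  Positions i, i' lie in the same J-region iff their region indices agree.\<close>
definition region :: "nat \<Rightarrow> nat set \<Rightarrow> nat \<Rightarrow> nat" where
  "region n J i = card {j. 1 \<le> j \<and> j < i \<and> j < n \<and> j \<notin> J}"

definition same_region :: "nat \<Rightarrow> nat set \<Rightarrow> nat \<Rightarrow> nat \<Rightarrow> bool" where
  "same_region n J a b \<longleftrightarrow> region n J a = region n J b"

definition parabolic_quotient :: "nat \<Rightarrow> nat set \<Rightarrow> (nat \<Rightarrow> nat) set" where
  "parabolic_quotient n J =
     {w. w permutes {1..n} \<and> (\<forall>i. 1 \<le> i \<and> i < n \<and> i \<in> J \<longrightarrow> w i < w (Suc i))}"

definition J231_avoiding :: "nat \<Rightarrow> nat set \<Rightarrow> (nat \<Rightarrow> nat) set" where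
  "J231_avoiding n J =
     {w \<in> parabolic_quotient n J.
        \<not> (\<exists>i j k. 1 \<le> i \<and> i < j \<and> j < k \<and> k \<le> n \<and>
             \<not> same_region n J i j \<and> \<not> same_region n J j k \<and> \<not> same_region n J i k \<and>
             w k < w i \<and> w i < w j \<and> w i = w k + 1)}"

definition bump :: "nat set set \<Rightarrow> nat \<Rightarrow> nat \<Rightarrow> bool" where
  "bump P a b \<longleftrightarrow> a < b \<and> (\<exists>B\<in>P. a \<in> B \<and> b \<in> B \<and> \<not> (\<exists>c\<in>B. a < c \<and> c < b))"

definition J_noncrossing :: "nat \<Rightarrow> nat set \<Rightarrow> nat set set set" where
  "J_noncrossing n J =
     {P. partition_on {1..n} P \<and>
        (\<forall>B\<in>P. \<forall>a\<in>B. \<forall>b\<in>B. a \<noteq> b \<longrightarrow> \<not> same_region n J a b) \<and>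
        (\<forall>i1 i2 j1 j2. bump P i1 i2 \<and> bump P j1 j2 \<and> (i1, i2) \<noteq> (j1, j2) \<and>
            i1 < j1 \<and> j1 < i2 \<and> i2 < j2 \<longrightarrow>
            same_region n J i1 j1 \<or> same_region n J i2 j1) \<and>
        (\<forall>i1 i2 j1 j2. bump P i1 i2 \<and> bump P j1 j2 \<and> (i1, i2) \<noteq> (j1, j2) \<and>
            i1 < j1 \<and> j1 < j2 \<and> j2 < i2 \<longrightarrow>
            \<not> same_region n J i1 j1)}"

definition J_nonnesting :: "nat \<Rightarrow> nat set \<Rightarrow> nat set set set" where
  "J_nonnesting n J =
     {P. partition_on {1..n} P \<and>
        (\<forall>B\<in>P. \<forall>a\<in>B. \<forall>b\<in>B. a \<noteq> b \<longrightarrow> \<not> same_region n J a b) \<and>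
        \<not> (\<exists>i1 i2 j1 j2. bump P i1 i2 \<and> bump P j1 j2 \<and> (i1, i2) \<noteq> (j1, j2) \<and>
            i1 < j1 \<and> j1 < j2 \<and> j2 < i2)}"

end

theory Submission
  imports Defs
begin

text \<open>All three families are in bijection with the ballot pairs \<open>(Op, Cl)\<close>: sets of
  openers and closers of the same size such that for every region \<open>r\<close> at most as many closers
  lie in regions \<open>\<le> r\<close> as openers lie in regions \<open>< r\<close>.  A partition is sent to the left and right
  ends of its bumps; a permutation \<open>w\<close> is sent to the positions of \<open>v + 2\<close> and \<open>v + 1\<close> for
  every value \<open>v\<close> such that \<open>v + 2\<close> stands to the left of \<open>v + 1\<close>.  Conversely each object is
  rebuilt greedily from its ends.  A J-noncrossing partition matches the leftmost closer with
  the first opener of the highest region below it, a J-nonnesting one with the leftmost opener.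
  The inverse word of an avoiding permutation starts with the leftmost position that is first in
  its region and not an opener; if that position is a closer, the next letter is the first
  position of the highest region below it.\<close>

section \<open>Arc diagrams of set partitions\<close>

definition arc_diagram :: "nat set \<Rightarrow> (nat \<times> nat) set \<Rightarrow> bool" where
  "arc_diagram X E \<longleftrightarrow>
     E \<subseteq> X \<times> X \<and> (\<forall>(a, b)\<in>E. a < b) \<and> single_valued E \<and> single_valued (E\<inverse>)"

definition bumps :: "nat set set \<Rightarrow> (nat \<times> nat) set" where
  "bumps P = {(a, b). bump P a b}"

lemma bumps_iff: "(a, b) \<in> bumps P \<longleftrightarrow> bump P a b"
  by (simp add: bumps_def)

definition linked :: "nat set \<Rightarrow> (nat \<times> nat) set \<Rightarrow> (nat \<times> nat) set" where
  "linked X E = {(x, y). x \<in> X \<and> y \<in> X \<and> ((x, y) \<in> E\<^sup>* \<or> (y, x) \<in> E\<^sup>*)}"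

lemma arc_diagram_subset: "arc_diagram X E \<Longrightarrow> E' \<subseteq> E \<Longrightarrow> arc_diagram X E'"
  unfolding arc_diagram_def single_valued_def by blast

lemma arc_diagram_left_unique: "arc_diagram X E \<Longrightarrow> (a, c) \<in> E \<Longrightarrow> (a', c) \<in> E \<Longrightarrow> a = a'"
  unfolding arc_diagram_def by (auto dest: single_valuedD)

lemma arc_diagram_finite: "finite X \<Longrightarrow> arc_diagram X E \<Longrightarrow> finite E"
  unfolding arc_diagram_def by (meson finite_SigmaI finite_subset)

lemma arc_diagram_rtrancl_le:
  assumes "arc_diagram X E" "(x, y) \<in> E\<^sup>*"
  shows "x \<le> y"
  using assms(2) by induction (use assms(1) in \<open>auto simp: arc_diagram_def\<close>)

lemma arc_diagram_rtrancl_comparable: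
  assumes "arc_diagram X E" "(x, y) \<in> E\<^sup>* \<or> (y, x) \<in> E\<^sup>*" "(y, z) \<in> E\<^sup>* \<or> (z, y) \<in> E\<^sup>*"
  shows "(x, z) \<in> E\<^sup>* \<or> (z, x) \<in> E\<^sup>*"
proof -
  have sv: "single_valued E" "single_valued (E\<inverse>)"
    using assms(1) by (auto simp: arc_diagram_def)
  have "(x, z) \<in> E\<^sup>* \<or> (z, x) \<in> E\<^sup>*" if "(x, y) \<in> E\<^sup>*" "(z, y) \<in> E\<^sup>*"
    using single_valued_confluent[OF sv(2), of y x z] that by (auto simp: rtrancl_converse)
  then show ?thesis
    using assms(2,3) single_valued_confluent[OF sv(1)] by (meson rtrancl_trans)
qed

lemma equiv_linked:
  assumes "arc_diagram X E"
  shows "equiv X (linked X E)"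
proof (rule equivI)
  show "trans (linked X E)"
  proof (rule transI)
    fix x y z
    assume "(x, y) \<in> linked X E" "(y, z) \<in> linked X E"
    then show "(x, z) \<in> linked X E"
      using arc_diagram_rtrancl_comparable[OF assms, of x y z] by (simp add: linked_def)
  qed
qed (auto simp: linked_def refl_on_def sym_def)

lemma bumpI_Least:
  assumes "B \<in> P" "a \<in> B" "b \<in> B" "a < b"
  shows "\<exists>c\<in>B. bump P a c \<and> c \<le> b"
proof -
  define c where "c = (LEAST c. c \<in> B \<and> a < c)"
  have c: "c \<in> B" "a < c" "c \<le> b"
    using LeastI[of "\<lambda>c. c \<in> B \<and> a < c" b] Least_le[of "\<lambda>c. c \<in> B \<and> a < c" b] assms
    by (auto simp: c_def)
  have "\<not> (\<exists>d\<in>B. a < d \<and> d < c)"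
    using not_less_Least by (auto simp: c_def)
  then show ?thesis
    using assms(1,2) c unfolding bump_def by blast
qed

lemma partition_on_block_unique:
  "partition_on X P \<Longrightarrow> B \<in> P \<Longrightarrow> B' \<in> P \<Longrightarrow> a \<in> B \<Longrightarrow> a \<in> B' \<Longrightarrow> B = B'"
  unfolding partition_on_def disjoint_def by blast

lemma bump_ends_unique:
  assumes P: "partition_on X P" and "bump P b c" "bump P b' c'"
  shows "b = b' \<longleftrightarrow> c = c'"
proof -
  obtain B B' where B: "B \<in> P" "b \<in> B" "c \<in> B" "\<not> (\<exists>d\<in>B. b < d \<and> d < c)" "b < c"
    and B': "B' \<in> P" "b' \<in> B'" "c' \<in> B'" "\<not> (\<exists>d\<in>B'. b' < d \<and> d < c')" "b' < c'"
    using assms(2,3) unfolding bump_def by blast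
  show ?thesis
  proof
    assume "b = b'"
    then have "B = B'"
      using partition_on_block_unique[OF P B(1) B'(1) B(2)] B'(2) by simp
    then show "c = c'"
      using B B' \<open>b = b'\<close> by (metis linorder_neqE_nat)
  next
    assume "c = c'"
    then have "B = B'"
      using partition_on_block_unique[OF P B(1) B'(1) B(3)] B'(3) by simp
    then show "b = b'"
      using B B' \<open>c = c'\<close> by (metis linorder_neqE_nat)
  qed
qed

lemma bumps_arc_diagram:
  assumes P: "partition_on X P"
  shows "arc_diagram X (bumps P)"
proof -
  have "single_valued (bumps P)" "single_valued ((bumps P)\<inverse>)"
    using bump_ends_unique[OF P] by (auto intro!: single_valuedI simp: bumps_def)
  moreover have "bumps P \<subseteq> X \<times> X" "\<forall>(a, b)\<in>bumps P. a < b"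
    using P unfolding bumps_def bump_def partition_on_def by blast+
  ultimately show ?thesis
    unfolding arc_diagram_def by blast
qed

lemma same_block_imp_bumps_rtrancl:
  assumes "B \<in> P" "x \<in> B" "y \<in> B" "x \<le> y"
  shows "(x, y) \<in> (bumps P)\<^sup>*"
  using assms
proof (induction "y - x" arbitrary: x rule: less_induct)
  case less
  show ?case
  proof (cases "x = y")
    case False
    then obtain c where c: "c \<in> B" "bump P x c" "c \<le> y"
      using bumpI_Least[OF less.prems(1-3)] less.prems(4) by auto
    then have "x < c"
      by (simp add: bump_def)
    then have "(c, y) \<in> (bumps P)\<^sup>*"
      using less.hyps[of c] less.prems c by simp
    then show ?thesis
      using c(2) by (simp add: bumps_def converse_rtrancl_into_rtrancl)
  qed simp
qed

lemma bumps_rtrancl_imp_same_block: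
  assumes P: "partition_on X P" and "(x, y) \<in> (bumps P)\<^sup>*" "x \<in> X"
  shows "\<exists>B\<in>P. x \<in> B \<and> y \<in> B"
  using assms(2,3)
proof induction
  case base
  then show ?case
    using P by (auto simp: partition_on_def)
next
  case (step y z)
  obtain B where B: "B \<in> P" "x \<in> B" "y \<in> B"
    using step.IH step.prems by blast
  obtain B' where B': "B' \<in> P" "y \<in> B'" "z \<in> B'"
    using step.hyps(2) unfolding bumps_def bump_def by blast
  show ?case
    using partition_on_block_unique[OF P B(1) B'(1) B(3) B'(2)] B B' by blast
qed

lemma same_block_eq_linked:
  assumes P: "partition_on X P"
  shows "{(x, y). \<exists>B\<in>P. x \<in> B \<and> y \<in> B} = linked X (bumps P)"
proof (intro set_eqI iffI)
  fix p
  assume "p \<in> {(x, y). \<exists>B\<in>P. x \<in> B \<and> y \<in> B}"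
  then obtain x y B where p: "p = (x, y)" "B \<in> P" "x \<in> B" "y \<in> B"
    by blast
  then have "x \<in> X" "y \<in> X"
    using P by (auto simp: partition_on_def)
  moreover have "(x, y) \<in> (bumps P)\<^sup>* \<or> (y, x) \<in> (bumps P)\<^sup>*"
    using same_block_imp_bumps_rtrancl[OF p(2-4)] same_block_imp_bumps_rtrancl[OF p(2,4,3)]
    by (meson nat_le_linear)
  ultimately show "p \<in> linked X (bumps P)"
    using p(1) by (simp add: linked_def)
next
  fix p
  assume "p \<in> linked X (bumps P)"
  then obtain x y where "p = (x, y)" "x \<in> X" "y \<in> X"
    "(x, y) \<in> (bumps P)\<^sup>* \<or> (y, x) \<in> (bumps P)\<^sup>*"
    by (auto simp: linked_def)
  then show "p \<in> {(x, y). \<exists>B\<in>P. x \<in> B \<and> y \<in> B}"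
    using bumps_rtrancl_imp_same_block[OF P] by blast
qed

lemma quotient_linked_bumps:
  assumes "partition_on X P"
  shows "X // linked X (bumps P) = P"
  using partition_on_eq_quotient[OF assms] by (simp add: same_block_eq_linked[OF assms])

lemma bumps_quotient_linked:
  assumes E: "arc_diagram X E"
  shows "bumps (X // linked X E) = E"
proof (intro set_eqI iffI)
  have lt: "\<And>a b. (a, b) \<in> E \<Longrightarrow> a < b" and sub: "E \<subseteq> X \<times> X"
    using E by (auto simp: arc_diagram_def)
  have eq: "equiv X (linked X E)"
    using equiv_linked[OF E] .
  have forward: "(a, b) \<in> E\<^sup>+" if "(a, b) \<in> linked X E" "a < b" for a b
    using that arc_diagram_rtrancl_le[OF E, of b a] by (auto simp: linked_def rtrancl_eq_or_trancl)
  fix p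
  assume "p \<in> bumps (X // linked X E)"
  then obtain a b B where ab: "p = (a, b)" "a < b" "B \<in> X // linked X E" "a \<in> B" "b \<in> B"
    and gap: "\<not> (\<exists>c\<in>B. a < c \<and> c < b)"
    unfolding bumps_def bump_def by auto
  have "(a, b) \<in> linked X E"
    using ab(3-5) eq by (meson quotient_eq_iff)
  then obtain u where u: "(a, u) \<in> E" "(u, b) \<in> E\<^sup>*"
    using forward ab(2) by (meson tranclD)
  have "(a, u) \<in> linked X E"
    using u(1) sub by (auto simp: linked_def)
  then have "u \<in> B"
    using ab(3,4) eq by (meson in_quotient_imp_closed)
  then have "u = b"
    using gap lt[OF u(1)] arc_diagram_rtrancl_le[OF E u(2)] by force
  then show "p \<in> E"
    using u ab by simp
next
  fix p
  assume p: "p \<in> E"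
  then obtain a b where ab: "p = (a, b)" "(a, b) \<in> E" "a < b" "a \<in> X" "b \<in> X"
    using E by (cases p) (auto simp: arc_diagram_def)
  define B where "B = linked X E `` {a}"
  have B: "B \<in> X // linked X E" "a \<in> B" "b \<in> B"
    using ab by (auto simp: B_def quotient_def linked_def)
  have "\<not> (\<exists>c\<in>B. a < c \<and> c < b)"
  proof
    assume "\<exists>c\<in>B. a < c \<and> c < b"
    then obtain c where c: "(a, c) \<in> linked X E" "a < c" "c < b"
      by (auto simp: B_def)
    then have "(a, c) \<in> E\<^sup>+"
      using arc_diagram_rtrancl_le[OF E, of c a] by (auto simp: linked_def rtrancl_eq_or_trancl)
    then obtain u where "(a, u) \<in> E" "(u, c) \<in> E\<^sup>*"
      by (meson tranclD)
    moreover have "u = b"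
      using calculation(1) ab(2) E by (auto simp: arc_diagram_def dest: single_valuedD)
    ultimately show False
      using arc_diagram_rtrancl_le[OF E] c(3) by fastforce
  qed
  then show "p \<in> bumps (X // linked X E)"
    using ab B unfolding bumps_def bump_def by blast
qed

lemma bij_betw_bumps: "bij_betw bumps {P. partition_on X P} {E. arc_diagram X E}"
proof (rule bij_betw_byWitness[where f' = "\<lambda>E. X // linked X E"])
  show "\<forall>P\<in>{P. partition_on X P}. X // linked X (bumps P) = P"
    using quotient_linked_bumps by blast
  show "\<forall>E\<in>{E. arc_diagram X E}. bumps (X // linked X E) = E"
    using bumps_quotient_linked by blast
  show "bumps ` {P. partition_on X P} \<subseteq> {E. arc_diagram X E}"
    using bumps_arc_diagram by blast
  show "(\<lambda>E. X // linked X E) ` {E. arc_diagram X E} \<subseteq> {P. partition_on X P}"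
    using partition_on_quotient equiv_linked by blast
qed

definition arc_ends :: "(nat \<times> nat) set \<Rightarrow> nat set \<times> nat set" where
  "arc_ends E = (fst ` E, snd ` E)"

lemma arc_diagram_inj_on:
  assumes "arc_diagram X E"
  shows "inj_on fst E" "inj_on snd E"
  using assms unfolding arc_diagram_def single_valued_def inj_on_def by auto

lemma arc_diagram_insert:
  assumes "arc_diagram X E" "a \<in> X" "c \<in> X" "a < c" "a \<notin> fst ` E" "c \<notin> snd ` E"
  shows "arc_diagram X (insert (a, c) E)"
  using assms unfolding arc_diagram_def single_valued_def by (auto simp: image_iff)

lemma arc_ends_remove:
  assumes "arc_diagram X E" "(a, c) \<in> E"
  shows "arc_ends (E - {(a, c)}) = (fst ` E - {a}, snd ` E - {c})"
proof -
  have "x = a \<longleftrightarrow> y = c" if "(x, y) \<in> E" for x y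
    using assms that unfolding arc_diagram_def single_valued_def by blast
  then show ?thesis
    unfolding arc_ends_def by (auto simp: image_iff) (metis prod.collapse)+
qed

fun nests :: "nat \<times> nat \<Rightarrow> nat \<times> nat \<Rightarrow> bool" where
  "nests (i1, i2) (j1, j2) \<longleftrightarrow> i1 < j1 \<and> j1 < j2 \<and> j2 < i2"

definition nonnesting_arcs :: "(nat \<times> nat) set \<Rightarrow> bool" where
  "nonnesting_arcs E \<longleftrightarrow> (\<forall>p\<in>E. \<forall>q\<in>E. \<not> nests p q)"

lemma nonnesting_arcs_iff:
  "nonnesting_arcs E \<longleftrightarrow> \<not> (\<exists>i1 i2 j1 j2. (i1, i2) \<in> E \<and> (j1, j2) \<in> E \<and> (i1, i2) \<noteq> (j1, j2) \<and>
      i1 < j1 \<and> j1 < j2 \<and> j2 < i2)"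
proof -
  have "nonnesting_arcs E \<longleftrightarrow>
      (\<forall>i1 i2 j1 j2. (i1, i2) \<in> E \<longrightarrow> (j1, j2) \<in> E \<longrightarrow> \<not> nests (i1, i2) (j1, j2))"
    unfolding nonnesting_arcs_def by fast
  then show ?thesis
    by (simp only: nests.simps prod.inject) (blast dest: less_imp_neq)
qed

section \<open>Ballot pairs\<close>

text \<open>\<open>rho x\<close> is the region of position \<open>x\<close>; all that is used about regions is that they are
  intervals, that is, that \<open>rho\<close> is monotone.\<close>

locale monotone_regions =
  fixes rho :: "nat \<Rightarrow> nat"
  assumes rho_mono: "x \<le> y \<Longrightarrow> rho x \<le> rho y"
begin

lemma rho_less_imp_less: "rho x < rho y \<Longrightarrow> x < y"
  using rho_mono[of y x] by (meson not_le)

definition region_separated :: "(nat \<times> nat) set \<Rightarrow> bool" where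
  "region_separated E \<longleftrightarrow> (\<forall>(a, b)\<in>E. rho a < rho b)"

lemma region_separated_bumps_iff:
  assumes P: "partition_on X P"
  shows "region_separated (bumps P) \<longleftrightarrow> (\<forall>B\<in>P. \<forall>a\<in>B. \<forall>b\<in>B. a \<noteq> b \<longrightarrow> rho a \<noteq> rho b)"
proof
  assume separated: "region_separated (bumps P)"
  show "\<forall>B\<in>P. \<forall>a\<in>B. \<forall>b\<in>B. a \<noteq> b \<longrightarrow> rho a \<noteq> rho b"
  proof (intro ballI impI notI)
    fix B a b
    assume B: "B \<in> P" "a \<in> B" "b \<in> B" "a \<noteq> b" and same: "rho a = rho b"
    define x y where "x = min a b" and "y = max a b"
    have xy: "x \<in> B" "y \<in> B" "x < y" "rho x = rho y"
      using B same by (auto simp: x_def y_def min_def max_def)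
    then obtain c where c: "c \<in> B" "bump P x c" "c \<le> y"
      using bumpI_Least[OF B(1)] by blast
    then have "x < c"
      by (simp add: bump_def)
    then have "rho x = rho c"
      using rho_mono[of x c] rho_mono[of c y] c(3) xy(4) by simp
    moreover have "rho x < rho c"
      using separated c(2) by (simp add: region_separated_def bumps_def)
    ultimately show False
      by simp
  qed
next
  assume apart: "\<forall>B\<in>P. \<forall>a\<in>B. \<forall>b\<in>B. a \<noteq> b \<longrightarrow> rho a \<noteq> rho b"
  show "region_separated (bumps P)"
    unfolding region_separated_def bumps_def
  proof clarify
    fix a b
    assume "bump P a b"
    then obtain B where "B \<in> P" "a \<in> B" "b \<in> B" "a < b"
      unfolding bump_def by blast
    then have "rho a \<noteq> rho b" "rho a \<le> rho b"
      using apart rho_mono[of a b] by auto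
    then show "rho a < rho b"
      by simp
  qed
qed

fun noncrossing_pair :: "nat \<times> nat \<Rightarrow> nat \<times> nat \<Rightarrow> bool" where
  "noncrossing_pair (i1, i2) (j1, j2) \<longleftrightarrow>
     (i1 < j1 \<and> j1 < i2 \<and> i2 < j2 \<longrightarrow> rho i1 = rho j1 \<or> rho i2 = rho j1) \<and>
     (nests (i1, i2) (j1, j2) \<longrightarrow> rho i1 \<noteq> rho j1)"

definition noncrossing_arcs :: "(nat \<times> nat) set \<Rightarrow> bool" where
  "noncrossing_arcs E \<longleftrightarrow> (\<forall>p\<in>E. \<forall>q\<in>E. noncrossing_pair p q)"

lemma noncrossing_arcs_iff:
  "noncrossing_arcs E \<longleftrightarrow>
    (\<forall>i1 i2 j1 j2. (i1, i2) \<in> E \<and> (j1, j2) \<in> E \<and> (i1, i2) \<noteq> (j1, j2) \<and>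
        i1 < j1 \<and> j1 < i2 \<and> i2 < j2 \<longrightarrow> rho i1 = rho j1 \<or> rho i2 = rho j1) \<and>
    (\<forall>i1 i2 j1 j2. (i1, i2) \<in> E \<and> (j1, j2) \<in> E \<and> (i1, i2) \<noteq> (j1, j2) \<and>
        i1 < j1 \<and> j1 < j2 \<and> j2 < i2 \<longrightarrow> \<not> rho i1 = rho j1)"
proof -
  have "noncrossing_arcs E \<longleftrightarrow>
      (\<forall>i1 i2 j1 j2. (i1, i2) \<in> E \<longrightarrow> (j1, j2) \<in> E \<longrightarrow> noncrossing_pair (i1, i2) (j1, j2))"
    unfolding noncrossing_arcs_def by fast
  then show ?thesis
    by (simp only: noncrossing_pair.simps nests.simps prod.inject) (blast dest: less_imp_neq)
qed

definition ballot_pairs :: "nat set \<Rightarrow> (nat set \<times> nat set) set" where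
  "ballot_pairs X = {(Op, Cl). Op \<subseteq> X \<and> Cl \<subseteq> X \<and> card Op = card Cl \<and>
      (\<forall>r. card {c\<in>Cl. rho c \<le> r} \<le> card {a\<in>Op. rho a < r})}"

lemma ballot_pairs_finite:
  "finite X \<Longrightarrow> (Op, Cl) \<in> ballot_pairs X \<Longrightarrow> finite Op \<and> finite Cl"
  unfolding ballot_pairs_def by (auto intro: finite_subset)

lemma ballot_pairs_mono: "(Op, Cl) \<in> ballot_pairs X \<Longrightarrow> Op \<union> Cl \<subseteq> Y \<Longrightarrow> (Op, Cl) \<in> ballot_pairs Y"
  unfolding ballot_pairs_def by auto

lemma ballot_pairs_opener_below:
  assumes "finite X" "(Op, Cl) \<in> ballot_pairs X" "c \<in> Cl"
  shows "\<exists>a\<in>Op. rho a < rho c"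
proof -
  have "0 < card {x\<in>Cl. rho x \<le> rho c}"
    using assms ballot_pairs_finite[OF assms(1,2)] by (auto simp: card_gt_0_iff)
  also have "\<dots> \<le> card {a\<in>Op. rho a < rho c}"
    using assms(2) by (simp add: ballot_pairs_def)
  finally show ?thesis
    by (metis (no_types, lifting) card.empty empty_Collect_eq less_irrefl)
qed

lemma ballot_pairs_remove:
  assumes X: "finite X" and T: "(Op, Cl) \<in> ballot_pairs X"
    and a: "a \<in> Op" and c: "c \<in> Cl" and ac: "rho a < rho c"
    and gap: "\<And>r. rho a < r \<Longrightarrow> r < rho c \<Longrightarrow> card {x\<in>Cl. rho x \<le> r} < card {y\<in>Op. rho y < r}"
  shows "(Op - {a}, Cl - {c}) \<in> ballot_pairs X"
proof -
  have fin: "finite Op" "finite Cl"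
    using ballot_pairs_finite[OF X T] by auto
  have ballot: "card {x\<in>Cl. rho x \<le> r} \<le> card {y\<in>Op. rho y < r}" for r
    using T by (simp add: ballot_pairs_def)
  have "card {x\<in>Cl - {c}. rho x \<le> r} \<le> card {y\<in>Op - {a}. rho y < r}" for r
  proof -
    have Cl_r: "{x\<in>Cl - {c}. rho x \<le> r} = {x\<in>Cl. rho x \<le> r} - {c}"
      and Op_r: "{y\<in>Op - {a}. rho y < r} = {y\<in>Op. rho y < r} - {a}"
      by auto
    consider "rho c \<le> r" | "r \<le> rho a" | "rho a < r" "r < rho c"
      by linarith
    then show ?thesis
    proof cases
      case 1
      then show ?thesis
        unfolding Cl_r Op_r using ballot[of r] a c ac fin by (simp add: card_Diff_singleton)
    next
      case 2
      then show ?thesis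
        unfolding Cl_r Op_r using ballot[of r] ac by simp
    next
      case 3
      then show ?thesis
        unfolding Cl_r Op_r using gap[OF 3] a fin by (simp add: card_Diff_singleton)
    qed
  qed
  then show ?thesis
    using T a c fin by (auto simp: ballot_pairs_def card_Diff_singleton)
qed

lemma ballot_pairs_remove_adjacent:
  assumes X: "finite X" and T: "(Op, Cl) \<in> ballot_pairs X"
    and i: "i \<in> Op" and f: "f \<in> Cl" "rho i < rho f"
    and top: "\<And>x. x \<in> Op \<Longrightarrow> rho x < rho f \<Longrightarrow> rho x \<le> rho i"
  shows "(Op - {i}, Cl - {f}) \<in> ballot_pairs X"
proof (rule ballot_pairs_remove[OF X T i f])
  fix r
  assume r: "rho i < r" "r < rho f"
  have fin: "finite Op" "finite Cl"
    using ballot_pairs_finite[OF X T] by auto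
  have "{y\<in>Op. rho y < r} = {y\<in>Op. rho y < rho f}"
    using top r by fastforce
  have "card (insert f {x\<in>Cl. rho x \<le> r}) \<le> card {x\<in>Cl. rho x \<le> rho f}"
    using fin f r by (intro card_mono) auto
  also have "\<dots> \<le> card {y\<in>Op. rho y < rho f}"
    using T by (simp add: ballot_pairs_def)
  also have "\<dots> = card {y\<in>Op. rho y < r}"
    using \<open>{y\<in>Op. rho y < r} = {y\<in>Op. rho y < rho f}\<close> by simp
  finally show "card {x\<in>Cl. rho x \<le> r} < card {y\<in>Op. rho y < r}"
    using fin r by simp
qed

lemma ballot_pairs_remove_leftmost:
  assumes X: "finite X" and T: "(Op, Cl) \<in> ballot_pairs X" and "Cl \<noteq> {}"
    and a: "a \<in> Op" "rho a < rho (Min Cl)"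
  shows "(Op - {a}, Cl - {Min Cl}) \<in> ballot_pairs X"
proof -
  have fin: "finite Op" "finite Cl"
    using ballot_pairs_finite[OF X T] by auto
  show ?thesis
  proof (rule ballot_pairs_remove[OF X T a(1) Min_in[OF fin(2) \<open>Cl \<noteq> {}\<close>] a(2)])
    fix r
    assume r: "rho a < r" "r < rho (Min Cl)"
    have "\<not> rho x \<le> r" if "x \<in> Cl" for x
      using rho_mono[OF Min_le[OF fin(2) that]] r(2) by linarith
    then have "card {x\<in>Cl. rho x \<le> r} = 0"
      by (metis (mono_tags, lifting) card.empty empty_Collect_eq)
    moreover have "0 < card {y\<in>Op. rho y < r}"
      using a r fin by (auto simp: card_gt_0_iff)
    ultimately show "card {x\<in>Cl. rho x \<le> r} < card {y\<in>Op. rho y < r}"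
      by simp
  qed
qed

lemma arc_ends_ballot_pairs:
  assumes X: "finite X" and E: "arc_diagram X E" "region_separated E"
  shows "arc_ends E \<in> ballot_pairs X"
proof -
  note inj = arc_diagram_inj_on[OF E(1)]
  have fin: "finite E"
    using arc_diagram_finite[OF X E(1)] .
  have "card {c\<in>snd ` E. rho c \<le> r} \<le> card {a\<in>fst ` E. rho a < r}" for r
  proof -
    define Er where "Er = {p\<in>E. rho (snd p) \<le> r}"
    have "{c\<in>snd ` E. rho c \<le> r} = snd ` Er"
      by (auto simp: Er_def)
    then have "card {c\<in>snd ` E. rho c \<le> r} = card (fst ` Er)"
      using inj by (simp add: card_image Er_def inj_on_subset)
    also have "\<dots> \<le> card {a\<in>fst ` E. rho a < r}"
      using E(2) fin by (intro card_mono) (auto simp: Er_def region_separated_def)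
    finally show ?thesis .
  qed
  moreover have "card (fst ` E) = card (snd ` E)"
    using inj by (simp add: card_image)
  ultimately show ?thesis
    using E(1) by (auto simp: arc_ends_def ballot_pairs_def arc_diagram_def)
qed

definition first_in_top_region :: "nat set \<Rightarrow> nat \<Rightarrow> bool" where
  "first_in_top_region S a \<longleftrightarrow>
     a \<in> S \<and> (\<forall>x\<in>S. x \<noteq> a \<longrightarrow> rho x < rho a \<or> rho x = rho a \<and> a < x)"

definition top_first :: "nat set \<Rightarrow> nat" where
  "top_first S = (THE a. first_in_top_region S a)"

lemma first_in_top_region_unique:
  "first_in_top_region S a \<Longrightarrow> first_in_top_region S b \<Longrightarrow> a = b"
  unfolding first_in_top_region_def by (metis not_less_iff_gr_or_eq)

lemma first_in_top_region_exists:
  assumes "finite S" "S \<noteq> {}"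
  shows "\<exists>a. first_in_top_region S a"
proof -
  define T where "T = {y\<in>S. rho y = Max (rho ` S)}"
  have "Max (rho ` S) \<in> rho ` S"
    using assms by (intro Max_in) auto
  then have "finite T" "T \<noteq> {}"
    using assms(1) unfolding T_def by force+
  then have "Min T \<in> T" "\<And>x. x \<in> T \<Longrightarrow> Min T \<le> x"
    by auto
  moreover have "\<And>x. x \<in> S \<Longrightarrow> rho x \<le> Max (rho ` S)"
    using assms by simp
  ultimately have "first_in_top_region S (Min T)"
    unfolding first_in_top_region_def T_def by (auto simp: le_less)
  then show ?thesis ..
qed

lemma first_in_top_region_top_first:
  "finite S \<Longrightarrow> S \<noteq> {} \<Longrightarrow> first_in_top_region S (top_first S)"
  unfolding top_first_def
  using first_in_top_region_exists first_in_top_region_unique by (metis theI)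

lemma top_first_eq: "first_in_top_region S a \<Longrightarrow> top_first S = a"
  unfolding top_first_def using first_in_top_region_unique by blast

end

section \<open>Greedy reconstruction of arc diagrams\<close>

text \<open>An arc diagram in the class cut out by \<open>Q\<close> is rebuilt from its ends by matching the
  leftmost closer \<open>c\<close> with the opener \<open>partner Op c\<close> and recursing.\<close>

locale greedy_arcs = monotone_regions +
  fixes X :: "nat set" and Q :: "(nat \<times> nat) set \<Rightarrow> bool" and partner :: "nat set \<Rightarrow> nat \<Rightarrow> nat"
  assumes finite_X: "finite X"
    and Q_empty: "Q {}"
    and Q_subset: "\<And>E E'. Q E \<Longrightarrow> E' \<subseteq> E \<Longrightarrow> Q E'"
    and partner_eq: "\<And>E a c. arc_diagram X E \<Longrightarrow> region_separated E \<Longrightarrow> Q E \<Longrightarrow> (a, c) \<in> E \<Longrightarrow>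
      (\<And>y. y \<in> snd ` E \<Longrightarrow> c \<le> y) \<Longrightarrow> partner (fst ` E) c = a"
    and partner_below: "\<And>Op Cl c. (Op, Cl) \<in> ballot_pairs X \<Longrightarrow> c \<in> Cl \<Longrightarrow>
      partner Op c \<in> Op \<and> rho (partner Op c) < rho c"
    and Q_insert: "\<And>E a c. arc_diagram X E \<Longrightarrow> Q E \<Longrightarrow> a \<notin> fst ` E \<Longrightarrow>
      (\<And>y. y \<in> snd ` E \<Longrightarrow> c < y) \<Longrightarrow> rho a < rho c \<Longrightarrow> partner (insert a (fst ` E)) c = a \<Longrightarrow>
      Q (insert (a, c) E)"
begin

definition diagrams :: "(nat \<times> nat) set set" where
  "diagrams = {E. arc_diagram X E \<and> region_separated E \<and> Q E}"

lemma diagrams_remove: "E \<in> diagrams \<Longrightarrow> E - {p} \<in> diagrams"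
  using arc_diagram_subset Q_subset by (auto simp: diagrams_def region_separated_def)

lemma arc_ends_inj: "E1 \<in> diagrams \<Longrightarrow> E2 \<in> diagrams \<Longrightarrow> arc_ends E1 = arc_ends E2 \<Longrightarrow> E1 = E2"
proof (induction "card E1" arbitrary: E1 E2)
  case 0
  then show ?case
    using arc_diagram_finite[OF finite_X] by (auto simp: arc_ends_def diagrams_def)
next
  case (Suc k)
  have E: "arc_diagram X E1" "region_separated E1" "Q E1" "arc_diagram X E2" "region_separated E2" "Q E2"
    using Suc.prems(1,2) by (simp_all add: diagrams_def)
  have ends: "fst ` E1 = fst ` E2" "snd ` E1 = snd ` E2"
    using Suc.prems(3) by (auto simp: arc_ends_def)
  have fin: "finite (snd ` E1)" "snd ` E1 \<noteq> {}"
    using Suc.hyps(2) E(1) arc_diagram_finite[OF finite_X] by auto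
  define c where "c = Min (snd ` E1)"
  have c_min: "\<And>y. y \<in> snd ` E1 \<Longrightarrow> c \<le> y"
    using fin by (simp add: c_def)
  have "c \<in> snd ` E1" "c \<in> snd ` E2"
    using fin ends(2) by (simp_all add: c_def)
  then obtain a1 a2 where a: "(a1, c) \<in> E1" "(a2, c) \<in> E2"
    by force
  have "partner (fst ` E1) c = a1" "partner (fst ` E2) c = a2"
    using partner_eq[of E1 a1 c] partner_eq[of E2 a2 c] E a c_min ends(2) by auto
  then have "a1 = a2"
    using ends(1) by simp
  define p where "p = (a1, c)"
  have "E1 - {p} = E2 - {p}"
  proof (rule Suc.hyps(1))
    show "k = card (E1 - {p})"
      using Suc.hyps(2) E(1) a(1) arc_diagram_finite[OF finite_X] by (simp add: p_def)
    show "E1 - {p} \<in> diagrams" "E2 - {p} \<in> diagrams"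
      using diagrams_remove Suc.prems(1,2) by blast+
    show "arc_ends (E1 - {p}) = arc_ends (E2 - {p})"
      using arc_ends_remove[OF E(1) a(1)] arc_ends_remove[OF E(4) a(2)] \<open>a1 = a2\<close> ends
      by (simp add: p_def)
  qed
  then show ?case
    using a \<open>a1 = a2\<close> by (auto simp: p_def)
qed

lemma insert_partner:
  assumes T: "(Op, Cl) \<in> ballot_pairs X" and "Cl \<noteq> {}"
    and E: "E \<in> diagrams" "arc_ends E = (Op - {partner Op (Min Cl)}, Cl - {Min Cl})"
  shows "insert (partner Op (Min Cl), Min Cl) E \<in> diagrams"
    and "arc_ends (insert (partner Op (Min Cl), Min Cl) E) = (Op, Cl)"
proof -
  define a c where "a = partner Op (Min Cl)" and "c = Min Cl"
  have fin: "finite Cl"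
    using ballot_pairs_finite[OF finite_X T] by simp
  have c: "c \<in> Cl" "\<And>x. x \<in> Cl \<Longrightarrow> c \<le> x"
    using fin \<open>Cl \<noteq> {}\<close> by (simp_all add: c_def)
  have a: "a \<in> Op" "rho a < rho c"
    using partner_below[OF T c(1)] by (simp_all add: a_def c_def)
  have sub: "Op \<subseteq> X" "Cl \<subseteq> X"
    using T by (auto simp: ballot_pairs_def)
  have E': "arc_diagram X E" "region_separated E" "Q E"
    using E(1) by (simp_all add: diagrams_def)
  have opens: "fst ` E = Op - {a}" and closes: "snd ` E = Cl - {c}"
    using E(2) by (auto simp: arc_ends_def a_def c_def)
  have later: "\<And>y. y \<in> snd ` E \<Longrightarrow> c < y"
    using closes c(2) by force
  have "insert a (fst ` E) = Op"
    using opens a(1) by auto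
  then have "partner (insert a (fst ` E)) c = a"
    by (simp add: a_def c_def)
  then have "Q (insert (a, c) E)"
    using Q_insert[of E a c] E' opens later a(2) by simp
  moreover have "arc_diagram X (insert (a, c) E)"
  proof (rule arc_diagram_insert)
    show "arc_diagram X E" "a \<notin> fst ` E" "c \<notin> snd ` E"
      using E' opens closes by simp_all
    show "a \<in> X" "c \<in> X" "a < c"
      using a c sub rho_less_imp_less by auto
  qed
  moreover have "region_separated (insert (a, c) E)"
    using E' a(2) by (simp add: region_separated_def)
  ultimately show "insert (a, c) E \<in> diagrams"
    by (simp add: diagrams_def)
  show "arc_ends (insert (a, c) E) = (Op, Cl)"
    using opens closes a(1) c(1) by (auto simp: arc_ends_def)
qed

lemma arc_ends_surj: "(Op, Cl) \<in> ballot_pairs X \<Longrightarrow> \<exists>E\<in>diagrams. arc_ends E = (Op, Cl)"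
proof (induction "card Cl" arbitrary: Op Cl)
  case 0
  have "finite Op" "finite Cl" "card Op = card Cl"
    using ballot_pairs_finite[OF finite_X 0(2)] 0(2) by (auto simp: ballot_pairs_def)
  then have "Op = {}" "Cl = {}"
    using 0(1) by simp_all
  moreover have "{} \<in> diagrams"
    using Q_empty by (simp add: diagrams_def arc_diagram_def region_separated_def)
  ultimately show ?case
    by (auto simp: arc_ends_def)
next
  case (Suc k)
  have "finite Cl" "Cl \<noteq> {}"
    using ballot_pairs_finite[OF finite_X Suc.prems] Suc.hyps(2) by auto
  then have "partner Op (Min Cl) \<in> Op" "rho (partner Op (Min Cl)) < rho (Min Cl)"
    using partner_below[OF Suc.prems Min_in] by simp_all
  then have "(Op - {partner Op (Min Cl)}, Cl - {Min Cl}) \<in> ballot_pairs X"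
    using ballot_pairs_remove_leftmost[OF finite_X Suc.prems \<open>Cl \<noteq> {}\<close>] by blast
  moreover have "k = card (Cl - {Min Cl})"
    using Suc.hyps(2) \<open>finite Cl\<close> \<open>Cl \<noteq> {}\<close> by simp
  ultimately obtain E where "E \<in> diagrams" "arc_ends E = (Op - {partner Op (Min Cl)}, Cl - {Min Cl})"
    using Suc.hyps(1) by blast
  then show ?case
    using insert_partner[OF Suc.prems \<open>Cl \<noteq> {}\<close>] by blast
qed

lemma bij_betw_arc_ends: "bij_betw arc_ends diagrams (ballot_pairs X)"
proof -
  have "arc_ends ` diagrams \<subseteq> ballot_pairs X"
    using arc_ends_ballot_pairs[OF finite_X] by (auto simp: diagrams_def)
  moreover have "ballot_pairs X \<subseteq> arc_ends ` diagrams"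
  proof
    fix p
    assume "p \<in> ballot_pairs X"
    then obtain E where "E \<in> diagrams" "arc_ends E = p"
      using arc_ends_surj[of "fst p" "snd p"] by auto
    then show "p \<in> arc_ends ` diagrams"
      by blast
  qed
  ultimately show ?thesis
    unfolding bij_betw_def inj_on_def using arc_ends_inj by blast
qed

end

context monotone_regions
begin

lemma noncrossing_partner:
  assumes E: "arc_diagram X E" "region_separated E" "noncrossing_arcs E" and ac: "(a, c) \<in> E"
    and c_min: "\<And>y. y \<in> snd ` E \<Longrightarrow> c \<le> y"
  shows "first_in_top_region {x\<in>fst ` E. rho x < rho c} a"
proof -
  have "a < c"
    using E(1) ac by (auto simp: arc_diagram_def)
  have "rho x < rho a \<or> rho x = rho a \<and> a < x"
    if x: "x \<in> fst ` E" "rho x < rho c" "x \<noteq> a" for x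
  proof -
    obtain y where xy: "(x, y) \<in> E"
      using x(1) by force
    have "y \<noteq> c"
      using arc_diagram_left_unique[OF E(1) xy] ac x(3) by blast
    then have "c < y"
      using c_min xy by force
    have "x < c"
      using rho_less_imp_less x(2) .
    consider "rho x < rho a" | "rho x = rho a" | "rho a < rho x"
      by linarith
    then show ?thesis
    proof cases
      case 2
      have "noncrossing_pair (x, y) (a, c)"
        using E(3) xy ac by (simp only: noncrossing_arcs_def)
      then have "\<not> x < a"
        using 2 \<open>c < y\<close> \<open>a < c\<close> by auto
      then show ?thesis
        using 2 x(3) by simp
    next
      case 3
      have "noncrossing_pair (a, c) (x, y)"
        using E(3) xy ac by (simp only: noncrossing_arcs_def)
      then have "rho x = rho a \<or> rho x = rho c"
        using 3 \<open>c < y\<close> \<open>x < c\<close> rho_less_imp_less by auto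
      then show ?thesis
        using 3 x(2) by simp
    qed simp
  qed
  moreover have "rho a < rho c"
    using E(2) ac by (auto simp: region_separated_def)
  ultimately show ?thesis
    using ac by (force simp: first_in_top_region_def)
qed

lemma noncrossing_insert:
  assumes E: "arc_diagram X E" "noncrossing_arcs E" and a: "a \<notin> fst ` E"
    and later: "\<And>y. y \<in> snd ` E \<Longrightarrow> c < y"
    and top: "first_in_top_region {x\<in>insert a (fst ` E). rho x < rho c} a"
  shows "noncrossing_arcs (insert (a, c) E)"
proof -
  have "rho a < rho c"
    using top by (simp add: first_in_top_region_def)
  have below_top: "rho x < rho a \<or> rho x = rho a \<and> a < x" if "x \<in> fst ` E" "rho x < rho c" for x
    using top that a by (auto simp: first_in_top_region_def)
  have crossing: "rho j1 = rho a \<or> rho j1 = rho c" if "(j1, j2) \<in> E" "a < j1" "j1 < c" for j1 j2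
  proof (cases "rho j1 = rho c")
    case False
    then have "rho j1 < rho c"
      using rho_mono[of j1 c] that(3) by simp
    then show ?thesis
      using below_top[of j1] rho_mono[of a j1] that by force
  qed simp
  have nesting: "rho a \<noteq> rho i1" if "(i1, i2) \<in> E" "i1 < a" for i1 i2
    using below_top[of i1] \<open>rho a < rho c\<close> that by force
  have "noncrossing_pair (a, c) q \<and> noncrossing_pair q (a, c)" if q_in: "q \<in> E" for q
  proof -
    obtain j1 j2 where q: "q = (j1, j2)" "(j1, j2) \<in> E"
      using q_in by (cases q) auto
    moreover have "c < j2"
      using later q(2) by force
    ultimately show ?thesis
      using crossing[of j1 j2] nesting[of j1 j2] by auto
  qed
  then show ?thesis
    using E(2) unfolding noncrossing_arcs_def by auto
qed

lemma bij_betw_arc_ends_noncrossing: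
  assumes "finite X"
  shows "bij_betw arc_ends {E. arc_diagram X E \<and> region_separated E \<and> noncrossing_arcs E}
    (ballot_pairs X)"
proof -
  interpret greedy_arcs rho X noncrossing_arcs "\<lambda>Op c. top_first {x\<in>Op. rho x < rho c}"
  proof unfold_locales
    show "finite X"
      by (rule assms)
    show "noncrossing_arcs {}"
      by (simp add: noncrossing_arcs_def)
    show "noncrossing_arcs E'" if "noncrossing_arcs E" "E' \<subseteq> E" for E E'
      using that unfolding noncrossing_arcs_def by blast
    show "top_first {x\<in>fst ` E. rho x < rho c} = a"
      if "arc_diagram X E" "region_separated E" "noncrossing_arcs E" "(a, c) \<in> E"
        "\<And>y. y \<in> snd ` E \<Longrightarrow> c \<le> y" for E a c
      by (rule top_first_eq[OF noncrossing_partner[OF that]])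
    show "top_first {x\<in>Op. rho x < rho c} \<in> Op \<and> rho (top_first {x\<in>Op. rho x < rho c}) < rho c"
      if "(Op, Cl) \<in> ballot_pairs X" "c \<in> Cl" for Op Cl c
    proof -
      have "finite {x\<in>Op. rho x < rho c}" "{x\<in>Op. rho x < rho c} \<noteq> {}"
        using ballot_pairs_finite[OF assms that(1)] ballot_pairs_opener_below[OF assms that] by auto
      then have "first_in_top_region {x\<in>Op. rho x < rho c} (top_first {x\<in>Op. rho x < rho c})"
        by (rule first_in_top_region_top_first)
      then show ?thesis
        by (simp add: first_in_top_region_def)
    qed
    show "noncrossing_arcs (insert (a, c) E)"
      if "arc_diagram X E" "noncrossing_arcs E" "a \<notin> fst ` E" "\<And>y. y \<in> snd ` E \<Longrightarrow> c < y"
        "rho a < rho c" "top_first {x\<in>insert a (fst ` E). rho x < rho c} = a" for E a c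
    proof (rule noncrossing_insert[OF that(1-4)])
      let ?S = "{x\<in>insert a (fst ` E). rho x < rho c}"
      have "finite ?S"
        using arc_diagram_finite[OF assms that(1)] by simp
      moreover have "a \<in> ?S"
        using that(5) by simp
      ultimately have "first_in_top_region ?S (top_first ?S)"
        using first_in_top_region_top_first by blast
      then show "first_in_top_region ?S a"
        using that(6) by simp
    qed
  qed
  show ?thesis
    using bij_betw_arc_ends by (simp add: diagrams_def)
qed

lemma nonnesting_partner:
  assumes E: "arc_diagram X E" "nonnesting_arcs E" and ac: "(a, c) \<in> E"
    and c_min: "\<And>y. y \<in> snd ` E \<Longrightarrow> c \<le> y" and x: "x \<in> fst ` E"
  shows "a \<le> x"
proof (rule ccontr)
  assume "\<not> a \<le> x"
  obtain y where xy: "(x, y) \<in> E"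
    using x by force
  have "y \<noteq> c"
    using arc_diagram_left_unique[OF E(1) ac] xy \<open>\<not> a \<le> x\<close> by auto
  then have "c < y"
    using c_min xy by force
  moreover have "a < c"
    using E(1) ac by (auto simp: arc_diagram_def)
  moreover have "\<not> nests (x, y) (a, c)"
    using E(2) xy ac unfolding nonnesting_arcs_def by blast
  ultimately show False
    using \<open>\<not> a \<le> x\<close> by simp
qed

lemma bij_betw_arc_ends_nonnesting:
  assumes "finite X"
  shows "bij_betw arc_ends {E. arc_diagram X E \<and> region_separated E \<and> nonnesting_arcs E}
    (ballot_pairs X)"
proof -
  interpret greedy_arcs rho X nonnesting_arcs "\<lambda>Op c. Min Op"
  proof unfold_locales
    show "finite X"
      by (rule assms)
    show "nonnesting_arcs {}"
      by (simp add: nonnesting_arcs_def)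
    show "nonnesting_arcs E'" if "nonnesting_arcs E" "E' \<subseteq> E" for E E'
      using that unfolding nonnesting_arcs_def by blast
    show "Min (fst ` E) = a"
      if "arc_diagram X E" "region_separated E" "nonnesting_arcs E" "(a, c) \<in> E"
        "\<And>y. y \<in> snd ` E \<Longrightarrow> c \<le> y" for E a c
    proof (rule Min_eqI)
      show "finite (fst ` E)"
        using arc_diagram_finite[OF assms that(1)] by simp
      show "a \<in> fst ` E"
        using that(4) by force
    qed (use nonnesting_partner[OF that(1,3-5)] in blast)
    show "Min Op \<in> Op \<and> rho (Min Op) < rho c"
      if T: "(Op, Cl) \<in> ballot_pairs X" "c \<in> Cl" for Op Cl c
    proof -
      obtain a where "a \<in> Op" "rho a < rho c"
        using ballot_pairs_opener_below[OF assms T] by blast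
      moreover have "finite Op"
        using ballot_pairs_finite[OF assms T(1)] by simp
      ultimately show ?thesis
        using rho_mono[of "Min Op" a] by (auto intro: Min_in)
    qed
    show "nonnesting_arcs (insert (a, c) E)"
      if E: "arc_diagram X E" "nonnesting_arcs E" "a \<notin> fst ` E" "\<And>y. y \<in> snd ` E \<Longrightarrow> c < y"
        "rho a < rho c" "Min (insert a (fst ` E)) = a" for E a c
    proof -
      have "finite (fst ` E)"
        using arc_diagram_finite[OF assms E(1)] by simp
      then have "a < x" if "(x, y) \<in> E" for x y
        using E(3,6) Min_le[of "insert a (fst ` E)" x] that by force
      moreover have "c < y" if "(x, y) \<in> E" for x y
        using E(4) that by force
      ultimately have "\<not> nests (a, c) q \<and> \<not> nests q (a, c)" if "q \<in> E" for q
        using that by (cases q) fastforce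
      then show ?thesis
        using E(2) unfolding nonnesting_arcs_def by auto
    qed
  qed
  show ?thesis
    using bij_betw_arc_ends by (simp add: diagrams_def)
qed

end

section \<open>Words avoiding 312 relative to the regions\<close>

definition descent :: "nat list \<Rightarrow> nat \<Rightarrow> bool" where
  "descent q v \<longleftrightarrow> Suc v < length q \<and> q ! Suc v < q ! v"

definition descent_arcs :: "nat list \<Rightarrow> (nat \<times> nat) set" where
  "descent_arcs q = {(q ! Suc v, q ! v) | v. descent q v}"

lemma descent_Cons_0: "descent (a # q) 0 \<longleftrightarrow> q \<noteq> [] \<and> hd q < a"
  unfolding descent_def by (cases q) auto

lemma descent_Cons_Suc: "descent (a # q) (Suc v) \<longleftrightarrow> descent q v"
  unfolding descent_def by auto

lemma descent_arcs_Cons: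
  "descent_arcs (a # q) =
     (if q \<noteq> [] \<and> hd q < a then insert (hd q, a) (descent_arcs q) else descent_arcs q)"
proof (intro set_eqI iffI)
  fix p
  assume "p \<in> descent_arcs (a # q)"
  then obtain v where "p = ((a # q) ! Suc v, (a # q) ! v)" "descent (a # q) v"
    by (auto simp: descent_arcs_def)
  then show "p \<in> (if q \<noteq> [] \<and> hd q < a then insert (hd q, a) (descent_arcs q) else descent_arcs q)"
    by (cases v) (auto simp: descent_arcs_def descent_Cons_0 descent_Cons_Suc hd_conv_nth)
next
  fix p
  assume p: "p \<in> (if q \<noteq> [] \<and> hd q < a then insert (hd q, a) (descent_arcs q) else descent_arcs q)"
  show "p \<in> descent_arcs (a # q)"
  proof (cases "p \<in> descent_arcs q")
    case True
    then obtain v where "p = ((a # q) ! Suc (Suc v), (a # q) ! Suc v)" "descent (a # q) (Suc v)"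
      by (auto simp: descent_arcs_def descent_Cons_Suc)
    then show ?thesis
      unfolding descent_arcs_def by blast
  next
    case False
    then have "p = ((a # q) ! Suc 0, (a # q) ! 0)" "descent (a # q) 0"
      using p by (auto simp: descent_Cons_0 hd_conv_nth split: if_splits)
    then show ?thesis
      unfolding descent_arcs_def by blast
  qed
qed

lemma descent_arcs_arc_diagram:
  assumes "distinct q"
  shows "arc_diagram (set q) (descent_arcs q)"
  unfolding arc_diagram_def single_valued_def descent_arcs_def descent_def
  using assms by (auto simp: nth_eq_iff_index_eq)

lemma hd_notin_fst_descent_arcs: "distinct q \<Longrightarrow> q \<noteq> [] \<Longrightarrow> hd q \<notin> fst ` descent_arcs q"
  unfolding descent_arcs_def descent_def by (auto simp: hd_conv_nth nth_eq_iff_index_eq)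

lemma notin_snd_descent_arcs: "a \<notin> set q \<Longrightarrow> a \<notin> snd ` descent_arcs q"
  unfolding descent_arcs_def descent_def by auto

lemma descent_arcs_tl:
  assumes "distinct (a # q)"
  shows "fst ` descent_arcs q =
      fst ` descent_arcs (a # q) - (if q \<noteq> [] \<and> hd q < a then {hd q} else {})"
    and "snd ` descent_arcs q = snd ` descent_arcs (a # q) - {a}"
    and "a \<in> snd ` descent_arcs (a # q) \<longleftrightarrow> q \<noteq> [] \<and> hd q < a"
  using assms hd_notin_fst_descent_arcs[of q] notin_snd_descent_arcs[of a q]
  by (auto simp: descent_arcs_Cons)

context monotone_regions
begin

definition region_sorted :: "nat list \<Rightarrow> bool" where
  "region_sorted q \<longleftrightarrow> (\<forall>u v. u < length q \<longrightarrow> v < length q \<longrightarrow>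
     q ! u < q ! v \<longrightarrow> rho (q ! u) = rho (q ! v) \<longrightarrow> u < v)"

text \<open>For \<open>q = inv_word n w\<close> (see below) a violation of \<open>avoids_312 q\<close> at \<open>v, t\<close> is exactly a
  J-231 pattern of \<open>w\<close> at the positions \<open>q ! Suc v < q ! t < q ! v\<close>.\<close>

definition avoids_312 :: "nat list \<Rightarrow> bool" where
  "avoids_312 q \<longleftrightarrow> \<not> (\<exists>v t. descent q v \<and> Suc v < t \<and> t < length q \<and>
     q ! Suc v < q ! t \<and> q ! t < q ! v \<and>
     rho (q ! t) \<noteq> rho (q ! v) \<and> rho (q ! t) \<noteq> rho (q ! Suc v) \<and> rho (q ! Suc v) \<noteq> rho (q ! v))"

definition avoiding_lists :: "nat set \<Rightarrow> nat list set" where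
  "avoiding_lists X = {q. distinct q \<and> set q = X \<and> region_sorted q \<and> avoids_312 q}"

definition region_firsts :: "nat set \<Rightarrow> nat set" where
  "region_firsts X = {x\<in>X. \<forall>y\<in>X. rho y = rho x \<longrightarrow> x \<le> y}"

lemma region_sortedD:
  "region_sorted q \<Longrightarrow> u < length q \<Longrightarrow> v < length q \<Longrightarrow> q ! u < q ! v \<Longrightarrow>
    rho (q ! u) = rho (q ! v) \<Longrightarrow> u < v"
  unfolding region_sorted_def by blast

lemma avoids_312D:
  "avoids_312 q \<Longrightarrow> descent q v \<Longrightarrow> Suc v < t \<Longrightarrow> t < length q \<Longrightarrow>
    q ! Suc v < q ! t \<Longrightarrow> q ! t < q ! v \<Longrightarrow> rho (q ! t) \<noteq> rho (q ! v) \<Longrightarrow>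
    rho (q ! t) \<noteq> rho (q ! Suc v) \<Longrightarrow> rho (q ! Suc v) \<noteq> rho (q ! v) \<Longrightarrow> False"
  unfolding avoids_312_def by blast

lemma region_sorted_Cons:
  "region_sorted (a # q) \<longleftrightarrow> region_sorted q \<and> (\<forall>x\<in>set q. rho x = rho a \<longrightarrow> a \<le> x)"
proof
  assume sorted: "region_sorted (a # q)"
  have "region_sorted q"
    unfolding region_sorted_def
  proof (intro allI impI)
    fix u v
    assume "u < length q" "v < length q" "q ! u < q ! v" "rho (q ! u) = rho (q ! v)"
    then show "u < v"
      using region_sortedD[OF sorted, of "Suc u" "Suc v"] by simp
  qed
  moreover have "a \<le> x" if x: "x \<in> set q" "rho x = rho a" for x
  proof (rule ccontr)
    assume "\<not> a \<le> x"
    obtain u where "u < length q" "q ! u = x"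
      using x(1) by (auto simp: in_set_conv_nth)
    then show False
      using region_sortedD[OF sorted, of "Suc u" 0] x(2) \<open>\<not> a \<le> x\<close> by simp
  qed
  ultimately show "region_sorted q \<and> (\<forall>x\<in>set q. rho x = rho a \<longrightarrow> a \<le> x)"
    by blast
next
  assume H: "region_sorted q \<and> (\<forall>x\<in>set q. rho x = rho a \<longrightarrow> a \<le> x)"
  show "region_sorted (a # q)"
    unfolding region_sorted_def
  proof (intro allI impI)
    fix u v
    assume uv: "u < length (a # q)" "v < length (a # q)" "(a # q) ! u < (a # q) ! v"
      "rho ((a # q) ! u) = rho ((a # q) ! v)"
    show "u < v"
    proof (cases u)
      case 0
      then show ?thesis
        using uv by (cases v) auto
    next
      case (Suc u')
      show ?thesis
      proof (cases v)
        case 0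
        have "q ! u' \<in> set q"
          using uv(1) Suc by simp
        then show ?thesis
          using H uv(3,4) Suc 0 by fastforce
      next
        case (Suc v')
        then show ?thesis
          using region_sortedD[of q u' v'] H uv \<open>u = Suc u'\<close> by simp
      qed
    qed
  qed
qed

lemma avoids_312_tl:
  assumes "avoids_312 (a # q)"
  shows "avoids_312 q"
  unfolding avoids_312_def
proof (intro notI, elim exE conjE)
  fix v t
  assume "descent q v" "Suc v < t" "t < length q" "q ! Suc v < q ! t" "q ! t < q ! v"
    "rho (q ! t) \<noteq> rho (q ! v)" "rho (q ! t) \<noteq> rho (q ! Suc v)" "rho (q ! Suc v) \<noteq> rho (q ! v)"
  then show False
    using avoids_312D[OF assms, of "Suc v" "Suc t"] by (simp add: descent_Cons_Suc)
qed

lemma avoids_312_ConsI: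
  assumes "avoids_312 q"
    and "\<And>x. q \<noteq> [] \<Longrightarrow> hd q < a \<Longrightarrow> x \<in> set (tl q) \<Longrightarrow> hd q < x \<Longrightarrow> x < a \<Longrightarrow>
      rho x = rho a \<or> rho x = rho (hd q) \<or> rho (hd q) = rho a"
  shows "avoids_312 (a # q)"
  unfolding avoids_312_def
proof (intro notI, elim exE conjE)
  fix v t
  assume pattern: "descent (a # q) v" "Suc v < t" "t < length (a # q)"
    "(a # q) ! Suc v < (a # q) ! t" "(a # q) ! t < (a # q) ! v"
    "rho ((a # q) ! t) \<noteq> rho ((a # q) ! v)" "rho ((a # q) ! t) \<noteq> rho ((a # q) ! Suc v)"
    "rho ((a # q) ! Suc v) \<noteq> rho ((a # q) ! v)"
  define t' where "t' = t - 2"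
  have t: "t = Suc (Suc t')"
    using pattern(2) by (simp add: t'_def)
  show False
  proof (cases v)
    case 0
    then have "q \<noteq> [] \<and> hd q < a"
      using pattern(1) by (simp add: descent_Cons_0)
    moreover have "(a # q) ! t \<in> set (tl q)" "(a # q) ! Suc 0 = hd q"
      using pattern(3) calculation t by (auto simp: hd_conv_nth nth_tl[symmetric])
    ultimately show False
      using assms(2)[of "(a # q) ! t"] pattern 0 by auto
  next
    case (Suc v')
    then show False
      using avoids_312D[OF assms(1), of v' "Suc t'"] pattern t by (simp add: descent_Cons_Suc)
  qed
qed

lemma avoids_312_ConsD:
  assumes "avoids_312 (a # q)" "q \<noteq> []" "hd q < a" "x \<in> set (tl q)" "hd q < x" "x < a"
  shows "rho x = rho a \<or> rho x = rho (hd q) \<or> rho (hd q) = rho a"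
proof -
  obtain i where i: "i < length (tl q)" "tl q ! i = x"
    using assms(4) by (auto simp: in_set_conv_nth)
  have "(a # q) ! Suc (Suc i) = x" "(a # q) ! Suc 0 = hd q" "Suc (Suc i) < length (a # q)"
    using i assms(2) by (auto simp: hd_conv_nth nth_tl)
  then show ?thesis
    using avoids_312D[OF assms(1), of 0 "Suc (Suc i)"] assms(2,3,5,6) by (auto simp: descent_Cons_0)
qed

lemma avoiding_lists_tl: "a # q \<in> avoiding_lists X \<Longrightarrow> q \<in> avoiding_lists (X - {a})"
  unfolding avoiding_lists_def using region_sorted_Cons avoids_312_tl by auto

lemma descent_arcs_region_separated:
  assumes "region_sorted q"
  shows "region_separated (descent_arcs q)"
  unfolding region_separated_def descent_arcs_def
proof (clarify)
  fix v
  assume "descent q v"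
  then have "Suc v < length q" "q ! Suc v < q ! v"
    by (auto simp: descent_def)
  then have "rho (q ! Suc v) \<noteq> rho (q ! v)"
    using region_sortedD[OF assms, of "Suc v" v] by auto
  then show "rho (q ! Suc v) < rho (q ! v)"
    using rho_mono[of "q ! Suc v" "q ! v"] \<open>q ! Suc v < q ! v\<close> by simp
qed

lemma avoiding_list_ballot_pairs:
  assumes "q \<in> avoiding_lists X"
  shows "arc_ends (descent_arcs q) \<in> ballot_pairs X"
  using assms arc_ends_ballot_pairs[of X "descent_arcs q"] descent_arcs_arc_diagram[of q]
    descent_arcs_region_separated[of q]
  by (auto simp: avoiding_lists_def)

lemma region_firsts_subset: "x \<in> region_firsts X \<Longrightarrow> x \<in> Y \<Longrightarrow> Y \<subseteq> X \<Longrightarrow> x \<in> region_firsts Y"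
  unfolding region_firsts_def by auto

lemma region_firsts_remove:
  "x \<in> region_firsts (X - {f}) \<Longrightarrow> rho x \<noteq> rho f \<Longrightarrow> x \<in> region_firsts X"
  unfolding region_firsts_def by auto

lemma first_in_top_region_below:
  assumes "first_in_top_region {x\<in>X. rho x < rho f} i"
  shows "i \<in> region_firsts X" "rho i < rho f" "\<And>x. x \<in> X \<Longrightarrow> rho x < rho f \<Longrightarrow> rho x \<le> rho i"
  using assms unfolding first_in_top_region_def region_firsts_def by force+

lemma region_firsts_diff_openers:
  assumes X: "finite X" "X \<noteq> {}" and T: "(Op, Cl) \<in> ballot_pairs X"
  shows "region_firsts X - Op \<noteq> {}"
proof -
  define m where "m = top_first X"
  have m: "first_in_top_region X m"
    using first_in_top_region_top_first[OF X] by (simp add: m_def)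
  then have top: "\<And>x. x \<in> X \<Longrightarrow> rho x \<le> rho m" and "m \<in> region_firsts X"
    by (force simp: first_in_top_region_def region_firsts_def)+
  have fin: "finite Op" "finite Cl" and sub: "Op \<subseteq> X" "Cl \<subseteq> X" and "card Op = card Cl"
    using ballot_pairs_finite[OF X(1) T] T by (auto simp: ballot_pairs_def)
  have "card {c\<in>Cl. rho c \<le> rho m} \<le> card {a\<in>Op. rho a < rho m}"
    using T by (simp add: ballot_pairs_def)
  moreover have "{c\<in>Cl. rho c \<le> rho m} = Cl"
    using top sub by auto
  ultimately have "card Op \<le> card {a\<in>Op. rho a < rho m}"
    using \<open>card Op = card Cl\<close> by simp
  moreover have "card {a\<in>Op. rho a < rho m} \<le> card Op"
    using fin by (intro card_mono) auto
  ultimately have "{a\<in>Op. rho a < rho m} = Op"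
    using fin by (intro card_subset_eq) auto
  then have "m \<notin> Op"
    by auto
  then show ?thesis
    using \<open>m \<in> region_firsts X\<close> by blast
qed

text \<open>Otherwise the first step of \<open>q\<close> from a region \<open>\<ge> rho (q ! t)\<close> down to a lower one is a
  descent that forms a 312 pattern with \<open>q ! t\<close>.\<close>

lemma region_first_le_before:
  assumes "distinct q" and sorted: "region_sorted q" and avoids: "avoids_312 q" and t: "t < length q"
    and first: "\<And>y. y \<in> set q \<Longrightarrow> rho y = rho (q ! t) \<Longrightarrow> q ! t \<le> y"
    and below_hd: "rho (q ! t) < rho (q ! 0)" and "s < t"
  shows "rho (q ! t) \<le> rho (q ! s)"
proof (rule ccontr)
  let ?m = "q ! t"
  assume "\<not> rho ?m \<le> rho (q ! s)"
  then obtain w where w: "w < s" "\<not> rho (q ! w) < rho ?m" "rho (q ! Suc w) < rho ?m"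
    using ex_least_nat_less[of "\<lambda>i. rho (q ! i) < rho ?m" s] below_hd by auto
  have "rho (q ! w) \<noteq> rho ?m"
  proof
    assume same: "rho (q ! w) = rho ?m"
    have "w < length q"
      using w(1) \<open>s < t\<close> t by simp
    then have "?m \<le> q ! w"
      using first[of "q ! w"] same by simp
    then have "?m < q ! w"
      using nth_eq_iff_index_eq[OF \<open>distinct q\<close> \<open>w < length q\<close> t] w(1) \<open>s < t\<close>
      by (simp add: le_less)
    then show False
      using region_sortedD[OF sorted t \<open>w < length q\<close>] same w(1) \<open>s < t\<close> by simp
  qed
  then have above_w: "rho ?m < rho (q ! w)"
    using w(2) by simp
  have "q ! Suc w < ?m" "?m < q ! w"
    using w(3) above_w rho_less_imp_less by blast+
  moreover have "descent q w"
    using calculation w(1) \<open>s < t\<close> t by (simp add: descent_def)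
  moreover have "Suc w < t"
    using w(1) \<open>s < t\<close> by simp
  moreover have "rho ?m \<noteq> rho (q ! w)" "rho ?m \<noteq> rho (q ! Suc w)" "rho (q ! Suc w) \<noteq> rho (q ! w)"
    using w(3) above_w by simp_all
  ultimately show False
    using avoids_312D[OF avoids _ _ t] by blast
qed

lemma hd_avoiding_list:
  assumes q: "q \<in> avoiding_lists X" "q \<noteq> []"
  shows "hd q = Min (region_firsts X - fst ` descent_arcs q)"
proof -
  have L: "distinct q" "set q = X" "region_sorted q" "avoids_312 q"
    using q(1) by (auto simp: avoiding_lists_def)
  obtain h r where qhr: "q = h # r"
    using q(2) by (cases q) auto
  have "\<forall>x\<in>set r. rho x = rho h \<longrightarrow> h \<le> x"
    using L(3) region_sorted_Cons by (simp add: qhr)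
  then have hd_first: "h \<in> region_firsts X"
    using L(2) by (auto simp: qhr region_firsts_def)
  have hd_least: "h \<le> m" if m: "m \<in> region_firsts X" "m \<notin> fst ` descent_arcs q" for m
  proof (rule ccontr)
    assume "\<not> h \<le> m"
    have m_first: "\<And>y. y \<in> X \<Longrightarrow> rho y = rho m \<Longrightarrow> m \<le> y"
      using m(1) by (auto simp: region_firsts_def)
    obtain t where t: "t < length q" "q ! t = m"
      using m(1) L(2) by (auto simp: region_firsts_def in_set_conv_nth)
    have "t \<noteq> 0"
      using t(2) qhr \<open>\<not> h \<le> m\<close> by (metis le_refl nth_Cons_0)
    then obtain s where s: "t = Suc s"
      using not0_implies_Suc by blast
    have "q ! s \<noteq> m"
      using nth_eq_iff_index_eq[OF L(1), of s t] t s by simp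
    moreover have "\<not> descent q s"
    proof
      assume "descent q s"
      then have "(m, q ! s) \<in> descent_arcs q"
        using t s unfolding descent_arcs_def by blast
      then show False
        using m(2) by force
    qed
    ultimately have "q ! s < m"
      using t s by (auto simp: descent_def)
    moreover have "q ! s \<in> X"
      using t s L(2) by auto
    ultimately have "rho (q ! s) < rho m"
      using rho_mono[of "q ! s" m] m_first[of "q ! s"] by fastforce
    moreover have "rho m \<noteq> rho h"
      using hd_first m(1) \<open>\<not> h \<le> m\<close> unfolding region_firsts_def by blast
    then have "rho m < rho (q ! 0)"
      using rho_mono[of m h] \<open>\<not> h \<le> m\<close> qhr by simp
    ultimately show False
      using region_first_le_before[OF L(1,3,4) t(1), of s] m_first L(2) t(2) s by simp
  qed
  have "h \<notin> fst ` descent_arcs q"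
    using hd_notin_fst_descent_arcs[OF L(1) q(2)] qhr by simp
  then have "Min (region_firsts X - fst ` descent_arcs q) = h"
    using hd_first hd_least L(2) by (intro Min_eqI) (auto simp: region_firsts_def)
  then show ?thesis
    using qhr by simp
qed

lemma second_of_avoiding_list:
  assumes fq: "f # q \<in> avoiding_lists X" and q: "q \<noteq> []" "hd q < f"
  shows "first_in_top_region {x\<in>X. rho x < rho f} (hd q)"
proof -
  have L: "distinct (f # q)" "set (f # q) = X" "region_sorted (f # q)" "avoids_312 (f # q)"
    using fq by (auto simp: avoiding_lists_def)
  have "rho (hd q) \<noteq> rho f"
    using region_sortedD[OF L(3), of 1 0] q by (auto simp: hd_conv_nth)
  then have hd_below: "rho (hd q) < rho f"
    using rho_mono[of "hd q" f] q(2) by simp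
  have "rho x < rho (hd q) \<or> rho x = rho (hd q) \<and> hd q < x"
    if x: "x \<in> X" "rho x < rho f" "x \<noteq> hd q" for x
  proof -
    have "x \<in> set (tl q)"
      using x L(1,2) q(1) by (cases q) auto
    consider "rho x < rho (hd q)" | "rho x = rho (hd q)" | "rho (hd q) < rho x"
      by linarith
    then show ?thesis
    proof cases
      case 2
      then have "hd q \<le> x"
        using L(3) \<open>x \<in> set (tl q)\<close> region_sorted_Cons[of "hd q" "tl q"] q(1)
        by (simp add: region_sorted_Cons)
      then show ?thesis
        using 2 x(3) by simp
    next
      case 3
      then show ?thesis
        using avoids_312_ConsD[OF L(4) q \<open>x \<in> set (tl q)\<close>] rho_less_imp_less[of "hd q" x]
          rho_less_imp_less[of x f] x(2) hd_below by auto
    qed simp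
  qed
  moreover have "hd q \<in> X"
    using L(2) q(1) by auto
  ultimately show ?thesis
    using hd_below by (simp add: first_in_top_region_def)
qed

lemma Cons_avoiding_lists:
  assumes f: "f \<in> region_firsts X" and q: "q \<in> avoiding_lists (X - {f})"
    and gap: "\<And>x. q \<noteq> [] \<Longrightarrow> hd q < f \<Longrightarrow> x \<in> X \<Longrightarrow> rho x < rho f \<Longrightarrow> rho x \<le> rho (hd q)"
  shows "f # q \<in> avoiding_lists X"
proof -
  have L: "distinct q" "set q = X - {f}" "region_sorted q" "avoids_312 q"
    using q by (auto simp: avoiding_lists_def)
  have "f \<in> X" "\<And>y. y \<in> X \<Longrightarrow> rho y = rho f \<Longrightarrow> f \<le> y"
    using f by (auto simp: region_firsts_def)
  then have "region_sorted (f # q)"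
    using L(2,3) by (simp add: region_sorted_Cons)
  moreover have "avoids_312 (f # q)"
  proof (rule avoids_312_ConsI[OF L(4)])
    fix x
    assume x: "q \<noteq> []" "hd q < f" "x \<in> set (tl q)" "hd q < x" "x < f"
    have "x \<in> X"
      using x(1,3) L(2) by (cases q) auto
    have "rho (hd q) \<le> rho x" "rho x \<le> rho f"
      using rho_mono x(4,5) by simp_all
    then show "rho x = rho f \<or> rho x = rho (hd q) \<or> rho (hd q) = rho f"
      using gap[OF x(1,2) \<open>x \<in> X\<close>] by linarith
  qed
  ultimately show ?thesis
    using L(1,2) \<open>f \<in> X\<close> by (auto simp: avoiding_lists_def)
qed

lemma avoiding_lists_inj:
  assumes "q1 \<in> avoiding_lists X" "q2 \<in> avoiding_lists X"
    and "arc_ends (descent_arcs q1) = arc_ends (descent_arcs q2)"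
  shows "q1 = q2"
  using assms
proof (induction q1 arbitrary: q2 X)
  case Nil
  then show ?case
    by (simp add: avoiding_lists_def)
next
  case (Cons f q1)
  obtain g q2' where q2: "q2 = g # q2'"
    using Cons.prems(1,2) by (cases q2) (auto simp: avoiding_lists_def)
  have ends: "fst ` descent_arcs (f # q1) = fst ` descent_arcs q2"
    "snd ` descent_arcs (f # q1) = snd ` descent_arcs q2"
    using Cons.prems(3) by (auto simp: arc_ends_def)
  have "f = g"
    using hd_avoiding_list[OF Cons.prems(1)] hd_avoiding_list[OF Cons.prems(2)] ends q2 by simp
  have dist: "distinct (f # q1)" "distinct (f # q2')"
    using Cons.prems(1,2) q2 \<open>f = g\<close> by (auto simp: avoiding_lists_def)
  have descents: "(q1 \<noteq> [] \<and> hd q1 < f) \<longleftrightarrow> (q2' \<noteq> [] \<and> hd q2' < f)"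
    using descent_arcs_tl(3)[OF dist(1)] descent_arcs_tl(3)[OF dist(2)] ends q2 \<open>f = g\<close> by simp
  have "hd q1 = hd q2'" if "q1 \<noteq> [] \<and> hd q1 < f"
    using second_of_avoiding_list[OF Cons.prems(1)] second_of_avoiding_list[of f q2' X]
      Cons.prems(2) q2 \<open>f = g\<close> that descents first_in_top_region_unique by auto
  then have "arc_ends (descent_arcs q1) = arc_ends (descent_arcs q2')"
    using descent_arcs_tl(1,2)[OF dist(1)] descent_arcs_tl(1,2)[OF dist(2)] ends q2 \<open>f = g\<close>
      descents by (auto simp: arc_ends_def)
  moreover have "q1 \<in> avoiding_lists (X - {f})" "q2' \<in> avoiding_lists (X - {f})"
    using avoiding_lists_tl Cons.prems(1,2) q2 \<open>f = g\<close> by auto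
  ultimately show ?case
    using Cons.IH q2 \<open>f = g\<close> by blast
qed

lemma Min_region_firsts_diff_openers:
  assumes X: "finite X" "X \<noteq> {}" and T: "(Op, Cl) \<in> ballot_pairs X"
  shows "Min (region_firsts X - Op) \<in> region_firsts X" "Min (region_firsts X - Op) \<notin> Op"
    and "\<And>m. m \<in> region_firsts X \<Longrightarrow> m \<notin> Op \<Longrightarrow> Min (region_firsts X - Op) \<le> m"
proof -
  have fin: "finite (region_firsts X - Op)"
    using X by (simp add: region_firsts_def)
  have "Min (region_firsts X - Op) \<in> region_firsts X - Op"
    using Min_in[OF fin region_firsts_diff_openers[OF X T]] .
  then show "Min (region_firsts X - Op) \<in> region_firsts X" "Min (region_firsts X - Op) \<notin> Op"
    by simp_all
  show "\<And>m. m \<in> region_firsts X \<Longrightarrow> m \<notin> Op \<Longrightarrow> Min (region_firsts X - Op) \<le> m"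
    using fin by simp
qed

lemma ballot_pairs_remove_closer:
  assumes X: "finite X" "X \<noteq> {}" and T: "(Op, Cl) \<in> ballot_pairs X"
    and f: "f = Min (region_firsts X - Op)" "f \<in> Cl" and i: "i = top_first {x\<in>X. rho x < rho f}"
  shows "first_in_top_region {x\<in>X. rho x < rho f} i" "i \<in> Op"
    and "(Op - {i}, Cl - {f}) \<in> ballot_pairs (X - {f})"
proof -
  note f_min = Min_region_firsts_diff_openers[OF X T, folded f(1)]
  have sub: "Op \<subseteq> X" "Cl \<subseteq> X"
    using T by (auto simp: ballot_pairs_def)
  obtain a where "a \<in> Op" "rho a < rho f"
    using ballot_pairs_opener_below[OF X(1) T f(2)] by blast
  then have "{x\<in>X. rho x < rho f} \<noteq> {}"
    using sub by auto
  moreover have "finite {x\<in>X. rho x < rho f}"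
    using X(1) by simp
  ultimately show top: "first_in_top_region {x\<in>X. rho x < rho f} i"
    unfolding i by (rule first_in_top_region_top_first[rotated])
  note i_below = first_in_top_region_below[OF top]
  show "i \<in> Op"
  proof (rule ccontr)
    assume "i \<notin> Op"
    then show False
      using f_min(3)[OF i_below(1)] rho_less_imp_less[OF i_below(2)] by simp
  qed
  have "(Op - {i}, Cl - {f}) \<in> ballot_pairs X"
  proof (rule ballot_pairs_remove_adjacent[OF X(1) T \<open>i \<in> Op\<close> f(2) i_below(2)])
    fix x
    assume "x \<in> Op" "rho x < rho f"
    then show "rho x \<le> rho i"
      using i_below(3) sub by blast
  qed
  then show "(Op - {i}, Cl - {f}) \<in> ballot_pairs (X - {f})"
    by (rule ballot_pairs_mono) (use sub f_min(2) in blast)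
qed

lemma Cons_closer_avoiding_lists:
  assumes X: "finite X" "X \<noteq> {}" and T: "(Op, Cl) \<in> ballot_pairs X"
    and f: "f = Min (region_firsts X - Op)" "f \<in> Cl" and i: "i = top_first {x\<in>X. rho x < rho f}"
    and q: "q \<in> avoiding_lists (X - {f})" "arc_ends (descent_arcs q) = (Op - {i}, Cl - {f})"
  shows "f # q \<in> avoiding_lists X" "arc_ends (descent_arcs (f # q)) = (Op, Cl)"
proof -
  note f_min = Min_region_firsts_diff_openers[OF X T, folded f(1)]
  note i_facts = ballot_pairs_remove_closer[OF X T f i]
  note i_below = first_in_top_region_below[OF i_facts(1)]
  have "i < f"
    using rho_less_imp_less[OF i_below(2)] .
  have "i \<in> X - {f}"
    using i_below(1) \<open>i < f\<close> by (simp add: region_firsts_def)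
  moreover have "set q = X - {f}"
    using q(1) unfolding avoiding_lists_def by blast
  ultimately have "q \<noteq> []"
    by (metis empty_iff set_empty)
  have "Min (region_firsts (X - {f}) - (Op - {i})) = i"
  proof (rule Min_eqI)
    show "finite (region_firsts (X - {f}) - (Op - {i}))"
      using X(1) by (simp add: region_firsts_def)
    show "i \<in> region_firsts (X - {f}) - (Op - {i})"
      using region_firsts_subset[OF i_below(1) \<open>i \<in> X - {f}\<close>] by simp
    fix m
    assume m: "m \<in> region_firsts (X - {f}) - (Op - {i})"
    show "i \<le> m"
    proof (rule ccontr)
      assume "\<not> i \<le> m"
      then have "m \<notin> Op" "rho m \<noteq> rho f"
        using m rho_mono[of m i] i_below(2) by auto
      then have "m \<in> region_firsts X"
        using region_firsts_remove m by blast
      then show False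
        using f_min(3)[OF _ \<open>m \<notin> Op\<close>] \<open>\<not> i \<le> m\<close> \<open>i < f\<close> by simp
    qed
  qed
  then have "hd q = i"
    using hd_avoiding_list[OF q(1) \<open>q \<noteq> []\<close>] q(2) by (simp add: arc_ends_def)
  show "f # q \<in> avoiding_lists X"
  proof (rule Cons_avoiding_lists[OF f_min(1) q(1)])
    fix x
    assume "x \<in> X" "rho x < rho f"
    then show "rho x \<le> rho (hd q)"
      using i_below(3) \<open>hd q = i\<close> by simp
  qed
  have "descent_arcs (f # q) = insert (i, f) (descent_arcs q)"
    using \<open>q \<noteq> []\<close> \<open>hd q = i\<close> \<open>i < f\<close> by (simp add: descent_arcs_Cons)
  then show "arc_ends (descent_arcs (f # q)) = (Op, Cl)"
    using q(2) i_facts(2) f(2) by (simp add: arc_ends_def insert_absorb)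
qed

lemma Cons_not_closer_avoiding_lists:
  assumes X: "finite X" "X \<noteq> {}" and T: "(Op, Cl) \<in> ballot_pairs X"
    and f: "f = Min (region_firsts X - Op)" "f \<notin> Cl"
    and q: "q \<in> avoiding_lists (X - {f})" "arc_ends (descent_arcs q) = (Op, Cl)"
  shows "f # q \<in> avoiding_lists X" "arc_ends (descent_arcs (f # q)) = (Op, Cl)"
proof -
  note f_min = Min_region_firsts_diff_openers[OF X T, folded f(1)]
  have T': "(Op, Cl) \<in> ballot_pairs (X - {f})"
    by (rule ballot_pairs_mono[OF T]) (use T f_min(2) f(2) in \<open>auto simp: ballot_pairs_def\<close>)
  have no_descent: "\<not> (q \<noteq> [] \<and> hd q < f)"
  proof
    assume d: "q \<noteq> [] \<and> hd q < f"
    have "set q = X - {f}"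
      using q(1) unfolding avoiding_lists_def by blast
    then have "X - {f} \<noteq> {}"
      using d by (metis set_empty)
    moreover have "hd q = Min (region_firsts (X - {f}) - Op)"
      using hd_avoiding_list[OF q(1)] q(2) d by (simp add: arc_ends_def)
    ultimately have hd: "hd q \<in> region_firsts (X - {f})" "hd q \<notin> Op"
      using Min_region_firsts_diff_openers(1,2)[of "X - {f}" Op Cl] T' X(1) by simp_all
    then have "hd q \<in> X"
      by (simp add: region_firsts_def)
    have "rho (hd q) \<noteq> rho f"
    proof
      assume "rho (hd q) = rho f"
      then have "f \<le> hd q"
        using f_min(1) \<open>hd q \<in> X\<close> by (simp add: region_firsts_def)
      then show False
        using d by simp
    qed
    then have "hd q \<in> region_firsts X"
      using region_firsts_remove hd(1) by blast
    then show False
      using f_min(3)[OF _ hd(2)] d by simp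
  qed
  then show "f # q \<in> avoiding_lists X"
    using Cons_avoiding_lists[OF f_min(1) q(1)] by blast
  show "arc_ends (descent_arcs (f # q)) = (Op, Cl)"
    using q(2) no_descent by (simp only: descent_arcs_Cons if_False)
qed

lemma avoiding_lists_surj:
  assumes "finite X" "(Op, Cl) \<in> ballot_pairs X"
  shows "\<exists>q\<in>avoiding_lists X. arc_ends (descent_arcs q) = (Op, Cl)"
  using assms
proof (induction "card X" arbitrary: X Op Cl)
  case 0
  then have "X = {}" "Op = {}" "Cl = {}"
    by (auto simp: ballot_pairs_def)
  moreover have "[] \<in> avoiding_lists {}"
    by (simp add: avoiding_lists_def region_sorted_def avoids_312_def descent_def)
  ultimately show ?case
    by (intro bexI[of _ "[]"]) (auto simp: arc_ends_def descent_arcs_def descent_def)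
next
  case (Suc k)
  have X: "finite X" "X \<noteq> {}"
    using Suc by auto
  define f where "f = Min (region_firsts X - Op)"
  have "f \<in> X"
    using Min_region_firsts_diff_openers(1)[OF X Suc.prems(2)] by (simp add: f_def region_firsts_def)
  then have IH: "\<exists>q\<in>avoiding_lists (X - {f}). arc_ends (descent_arcs q) = (Op', Cl')"
    if "(Op', Cl') \<in> ballot_pairs (X - {f})" for Op' Cl'
    using Suc.hyps(1)[of "X - {f}"] Suc.hyps(2) X(1) that by simp
  show ?case
  proof (cases "f \<in> Cl")
    case True
    define i where "i = top_first {x\<in>X. rho x < rho f}"
    obtain q where "q \<in> avoiding_lists (X - {f})" "arc_ends (descent_arcs q) = (Op - {i}, Cl - {f})"
      using IH ballot_pairs_remove_closer(3)[OF X Suc.prems(2) f_def True i_def] by blast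
    then show ?thesis
      using Cons_closer_avoiding_lists[OF X Suc.prems(2) f_def True i_def] by blast
  next
    case False
    have "(Op, Cl) \<in> ballot_pairs (X - {f})"
      using Suc.prems(2) Min_region_firsts_diff_openers(2)[OF X Suc.prems(2)] False
      by (auto simp: ballot_pairs_def f_def)
    then obtain q where "q \<in> avoiding_lists (X - {f})" "arc_ends (descent_arcs q) = (Op, Cl)"
      using IH by blast
    then show ?thesis
      using Cons_not_closer_avoiding_lists[OF X Suc.prems(2) f_def False] by blast
  qed
qed

lemma bij_betw_arc_ends_avoiding_lists:
  assumes "finite X"
  shows "bij_betw (\<lambda>q. arc_ends (descent_arcs q)) (avoiding_lists X) (ballot_pairs X)"
  unfolding bij_betw_def
proof
  show "inj_on (\<lambda>q. arc_ends (descent_arcs q)) (avoiding_lists X)"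
    using avoiding_lists_inj by (intro inj_onI) blast
  show "(\<lambda>q. arc_ends (descent_arcs q)) ` avoiding_lists X = ballot_pairs X"
  proof
    show "(\<lambda>q. arc_ends (descent_arcs q)) ` avoiding_lists X \<subseteq> ballot_pairs X"
      using avoiding_list_ballot_pairs by blast
    show "ballot_pairs X \<subseteq> (\<lambda>q. arc_ends (descent_arcs q)) ` avoiding_lists X"
    proof
      fix p
      assume "p \<in> ballot_pairs X"
      then obtain q where "q \<in> avoiding_lists X" "arc_ends (descent_arcs q) = p"
        using avoiding_lists_surj[OF assms, of "fst p" "snd p"] by auto
      then show "p \<in> (\<lambda>q. arc_ends (descent_arcs q)) ` avoiding_lists X"
        by blast
    qed
  qed
qed

end

section \<open>Parabolic quotients and J-regions\<close>

lemma region_mono: "i \<le> i' \<Longrightarrow> region n J i \<le> region n J i'"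
  unfolding region_def by (rule card_mono) auto

lemma region_Suc_eq_iff:
  assumes "1 \<le> i" "i < n"
  shows "region n J (Suc i) = region n J i \<longleftrightarrow> i \<in> J"
proof -
  have "{j. 1 \<le> j \<and> j < Suc i \<and> j < n \<and> j \<notin> J} =
      {j. 1 \<le> j \<and> j < i \<and> j < n \<and> j \<notin> J} \<union> (if i \<in> J then {} else {i})"
    using assms by (auto simp: less_Suc_eq)
  then show ?thesis
    unfolding region_def by simp
qed

interpretation J_regions: monotone_regions "region n J" for n J
  by unfold_locales (rule region_mono)

lemma parabolic_iff_increasing_on_regions:
  fixes w :: "nat \<Rightarrow> nat"
  shows "(\<forall>i. 1 \<le> i \<and> i < n \<and> i \<in> J \<longrightarrow> w i < w (Suc i)) \<longleftrightarrow>
    (\<forall>a\<in>{1..n}. \<forall>b\<in>{1..n}. a < b \<longrightarrow> region n J a = region n J b \<longrightarrow> w a < w b)"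
proof
  assume steps: "\<forall>i. 1 \<le> i \<and> i < n \<and> i \<in> J \<longrightarrow> w i < w (Suc i)"
  show "\<forall>a\<in>{1..n}. \<forall>b\<in>{1..n}. a < b \<longrightarrow> region n J a = region n J b \<longrightarrow> w a < w b"
  proof (intro ballI impI)
    fix a b
    assume ab: "a \<in> {1..n}" "b \<in> {1..n}" "a < b" "region n J a = region n J b"
    show "w a < w b"
    proof (rule lift_Suc_mono_less_ivl[where f = w and N = "{a..<b}", OF _ ab(3) order_refl])
      fix c
      assume c: "c \<in> {a..<b}"
      then have "region n J a \<le> region n J c" "region n J (Suc c) \<le> region n J b"
        "region n J c \<le> region n J (Suc c)"
        using region_mono[of a c] region_mono[of "Suc c" b] region_mono[of c "Suc c"] by auto
      then have "region n J (Suc c) = region n J c"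
        using ab(4) by simp
      moreover have "1 \<le> c" "c < n"
        using ab c by auto
      ultimately have "c \<in> J"
        using region_Suc_eq_iff by blast
      then show "w c < w (Suc c)"
        using steps \<open>1 \<le> c\<close> \<open>c < n\<close> by blast
    qed
  qed
next
  assume increasing: "\<forall>a\<in>{1..n}. \<forall>b\<in>{1..n}. a < b \<longrightarrow> region n J a = region n J b \<longrightarrow> w a < w b"
  show "\<forall>i. 1 \<le> i \<and> i < n \<and> i \<in> J \<longrightarrow> w i < w (Suc i)"
  proof (intro allI impI)
    fix i
    assume i: "1 \<le> i \<and> i < n \<and> i \<in> J"
    then have "region n J (Suc i) = region n J i"
      using region_Suc_eq_iff by blast
    then show "w i < w (Suc i)"
      using increasing i by simp
  qed
qed

text \<open>\<open>inv_word n w ! v\<close> is the position of the value \<open>v + 1\<close> in \<open>w\<close>.\<close>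

definition inv_word :: "nat \<Rightarrow> (nat \<Rightarrow> nat) \<Rightarrow> nat list" where
  "inv_word n w = map (inv w) [1..<Suc n]"

lemma inv_word:
  assumes w: "w permutes {1..n}"
  shows "length (inv_word n w) = n" "distinct (inv_word n w)" "set (inv_word n w) = {1..n}"
    and "\<And>v. v < n \<Longrightarrow> inv_word n w ! v = inv w (Suc v)"
    and "\<And>v. v < n \<Longrightarrow> w (inv_word n w ! v) = Suc v"
    and "\<And>x. x \<in> {1..n} \<Longrightarrow> w x - 1 < n \<and> inv_word n w ! (w x - 1) = x"
proof -
  have w_inv: "inv w permutes {1..n}"
    using permutes_inv[OF w] .
  show nth: "inv_word n w ! v = inv w (Suc v)" if "v < n" for v
    unfolding inv_word_def using that by (subst nth_map_upt) auto
  show "length (inv_word n w) = n"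
    by (simp add: inv_word_def)
  show "distinct (inv_word n w)"
    unfolding inv_word_def distinct_map using permutes_inj[OF w_inv] by (auto intro: inj_on_subset)
  show "set (inv_word n w) = {1..n}"
    unfolding inv_word_def using permutes_image[OF w_inv]
    by (metis atLeastLessThanSuc_atLeastAtMost image_set set_upt)
  show "\<And>v. v < n \<Longrightarrow> w (inv_word n w ! v) = Suc v"
    using nth permutes_inverses(1)[OF w] by simp
  fix x
  assume x: "x \<in> {1..n}"
  then have "w x \<in> {1..n}"
    using permutes_in_image[OF w] by simp
  then show "w x - 1 < n \<and> inv_word n w ! (w x - 1) = x"
    using nth[of "w x - 1"] permutes_inverses(2)[OF w] by auto
qed

lemma distinct_list_permutes:
  assumes "distinct q" "set q = {1..n}"
  shows "(\<lambda>x. if x \<in> {1..n} then q ! (x - 1) else x) permutes {1..n}"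
proof (rule bij_imp_permutes)
  have "length q = n"
    using assms distinct_card by fastforce
  then have "bij_betw (\<lambda>x. x - 1) {1..n} {..<length q}"
    by (intro bij_betw_byWitness[where f' = Suc]) auto
  then have "bij_betw ((!) q \<circ> (\<lambda>x. x - 1)) {1..n} {1..n}"
    using bij_betw_nth[OF assms(1) refl assms(2)[symmetric]] by (rule bij_betw_trans)
  moreover have "bij_betw (\<lambda>x. if x \<in> {1..n} then q ! (x - 1) else x) {1..n} {1..n} =
      bij_betw ((!) q \<circ> (\<lambda>x. x - 1)) {1..n} {1..n}"
    by (rule bij_betw_cong) simp
  ultimately show "bij_betw (\<lambda>x. if x \<in> {1..n} then q ! (x - 1) else x) {1..n} {1..n}"
    by simp
qed auto

lemma bij_betw_inv_word:
  "bij_betw (inv_word n) {w. w permutes {1..n}} {q. distinct q \<and> set q = {1..n}}"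
proof (rule bij_betw_byWitness[where f' = "\<lambda>q. inv (\<lambda>x. if x \<in> {1..n} then q ! (x - 1) else x)"])
  show "\<forall>w\<in>{w. w permutes {1..n}}.
      inv (\<lambda>x. if x \<in> {1..n} then inv_word n w ! (x - 1) else x) = w"
  proof
    fix w
    assume "w \<in> {w. w permutes {1..n}}"
    then have w: "w permutes {1..n}"
      by simp
    have "(\<lambda>x. if x \<in> {1..n} then inv_word n w ! (x - 1) else x) = inv w"
    proof
      fix x
      show "(if x \<in> {1..n} then inv_word n w ! (x - 1) else x) = inv w x"
        using inv_word(4)[OF w, of "x - 1"] permutes_not_in[OF permutes_inv[OF w], of x] by auto
    qed
    then show "inv (\<lambda>x. if x \<in> {1..n} then inv_word n w ! (x - 1) else x) = w"
      using permutes_inv_inv[OF w] by simp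
  qed
  show "\<forall>q\<in>{q. distinct q \<and> set q = {1..n}}.
      inv_word n (inv (\<lambda>x. if x \<in> {1..n} then q ! (x - 1) else x)) = q"
  proof
    fix q
    assume "q \<in> {q. distinct q \<and> set q = {1..n}}"
    then have q: "distinct q" "set q = {1..n}" "length q = n"
      using distinct_card by fastforce+
    show "inv_word n (inv (\<lambda>x. if x \<in> {1..n} then q ! (x - 1) else x)) = q"
      unfolding inv_word_def permutes_inv_inv[OF distinct_list_permutes[OF q(1,2)]]
      using q(3) by (intro nth_equalityI) (auto simp del: upt_Suc simp: nth_map_upt)
  qed
  show "inv_word n ` {w. w permutes {1..n}} \<subseteq> {q. distinct q \<and> set q = {1..n}}"
    using inv_word(2,3) by blast
  show "(\<lambda>q. inv (\<lambda>x. if x \<in> {1..n} then q ! (x - 1) else x)) ` {q. distinct q \<and> set q = {1..n}}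
      \<subseteq> {w. w permutes {1..n}}"
    using distinct_list_permutes permutes_inv by blast
qed

lemma region_sorted_inv_word_iff:
  assumes w: "w permutes {1..n}"
  shows "J_regions.region_sorted n J (inv_word n w) \<longleftrightarrow>
    (\<forall>a\<in>{1..n}. \<forall>b\<in>{1..n}. a < b \<longrightarrow> region n J a = region n J b \<longrightarrow> w a < w b)"
proof -
  note q = inv_word[OF w]
  let ?q = "inv_word n w"
  have "(\<forall>u v. u < n \<longrightarrow> v < n \<longrightarrow> ?q ! u < ?q ! v \<longrightarrow> region n J (?q ! u) = region n J (?q ! v) \<longrightarrow> u < v)
    \<longleftrightarrow> (\<forall>a\<in>{1..n}. \<forall>b\<in>{1..n}. a < b \<longrightarrow> region n J a = region n J b \<longrightarrow> w a < w b)"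
  proof
    assume sorted: "\<forall>u v. u < n \<longrightarrow> v < n \<longrightarrow> ?q ! u < ?q ! v \<longrightarrow>
      region n J (?q ! u) = region n J (?q ! v) \<longrightarrow> u < v"
    show "\<forall>a\<in>{1..n}. \<forall>b\<in>{1..n}. a < b \<longrightarrow> region n J a = region n J b \<longrightarrow> w a < w b"
    proof (intro ballI impI)
      fix a b
      assume ab: "a \<in> {1..n}" "b \<in> {1..n}" "a < b" "region n J a = region n J b"
      have "w a - 1 < w b - 1"
        using sorted[rule_format, of "w a - 1" "w b - 1"] q(6)[OF ab(1)] q(6)[OF ab(2)] ab(3,4)
        by simp
      then show "w a < w b"
        by simp
    qed
  next
    assume increasing: "\<forall>a\<in>{1..n}. \<forall>b\<in>{1..n}. a < b \<longrightarrow> region n J a = region n J b \<longrightarrow> w a < w b"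
    show "\<forall>u v. u < n \<longrightarrow> v < n \<longrightarrow> ?q ! u < ?q ! v \<longrightarrow>
      region n J (?q ! u) = region n J (?q ! v) \<longrightarrow> u < v"
    proof (intro allI impI)
      fix u v
      assume uv: "u < n" "v < n" "?q ! u < ?q ! v" "region n J (?q ! u) = region n J (?q ! v)"
      have "?q ! u \<in> {1..n}" "?q ! v \<in> {1..n}"
        using nth_mem[of u ?q] nth_mem[of v ?q] q(1,3) uv(1,2) by simp_all
      then have "w (?q ! u) < w (?q ! v)"
        using increasing uv(3,4) by blast
      then show "u < v"
        using q(5) uv(1,2) by simp
    qed
  qed
  then show ?thesis
    unfolding J_regions.region_sorted_def q(1) .
qed

lemma avoids_312_inv_word_iff:
  assumes w: "w permutes {1..n}"
  shows "J_regions.avoids_312 n J (inv_word n w) \<longleftrightarrow>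
    \<not> (\<exists>i j k. 1 \<le> i \<and> i < j \<and> j < k \<and> k \<le> n \<and>
      \<not> same_region n J i j \<and> \<not> same_region n J j k \<and> \<not> same_region n J i k \<and>
      w k < w i \<and> w i < w j \<and> w i = w k + 1)"
    (is "_ \<longleftrightarrow> \<not> ?pattern")
proof -
  note q = inv_word[OF w]
  let ?q = "inv_word n w"
  have "(\<exists>v t. descent ?q v \<and> Suc v < t \<and> t < length ?q \<and> ?q ! Suc v < ?q ! t \<and> ?q ! t < ?q ! v \<and>
      region n J (?q ! t) \<noteq> region n J (?q ! v) \<and> region n J (?q ! t) \<noteq> region n J (?q ! Suc v) \<and>
      region n J (?q ! Suc v) \<noteq> region n J (?q ! v)) \<longleftrightarrow> ?pattern"
  proof
    assume "\<exists>v t. descent ?q v \<and> Suc v < t \<and> t < length ?q \<and> ?q ! Suc v < ?q ! t \<and>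
      ?q ! t < ?q ! v \<and> region n J (?q ! t) \<noteq> region n J (?q ! v) \<and>
      region n J (?q ! t) \<noteq> region n J (?q ! Suc v) \<and> region n J (?q ! Suc v) \<noteq> region n J (?q ! v)"
    then obtain v t where vt: "descent ?q v" "Suc v < t" "t < length ?q" "?q ! Suc v < ?q ! t"
      "?q ! t < ?q ! v" "region n J (?q ! t) \<noteq> region n J (?q ! v)"
      "region n J (?q ! t) \<noteq> region n J (?q ! Suc v)" "region n J (?q ! Suc v) \<noteq> region n J (?q ! v)"
      by blast
    have "t < n" "Suc v < n"
      using vt(2,3) q(1) by simp_all
    then have "1 \<le> ?q ! Suc v" "?q ! v \<le> n"
      using q(1,3) nth_mem[of "Suc v" ?q] nth_mem[of v ?q] by auto
    moreover have "w (?q ! Suc v) = Suc (Suc v)" "w (?q ! t) = Suc t" "w (?q ! v) = Suc v"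
      using q(5) \<open>t < n\<close> \<open>Suc v < n\<close> by auto
    ultimately show ?pattern
      using vt unfolding same_region_def by (intro exI[of _ "?q ! Suc v"] exI[of _ "?q ! t"] exI[of _ "?q ! v"]) auto
  next
    assume ?pattern
    then obtain i j k where ijk: "1 \<le> i" "i < j" "j < k" "k \<le> n" "\<not> same_region n J i j"
      "\<not> same_region n J j k" "\<not> same_region n J i k" "w k < w i" "w i < w j" "w i = w k + 1"
      by blast
    have "i \<in> {1..n}" "j \<in> {1..n}" "k \<in> {1..n}"
      using ijk(1-4) by auto
    note i = q(6)[OF this(1)] and j = q(6)[OF this(2)] and k = q(6)[OF this(3)]
    have "1 \<le> w k"
      using permutes_in_image[OF w, of k] \<open>k \<in> {1..n}\<close> by simp
    define v where "v = w k - 1"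
    define t where "t = w j - 1"
    have v: "?q ! v = k" "?q ! Suc v = i" "?q ! t = j" "Suc v < t" "t < length ?q"
      using i j k ijk(8-10) \<open>1 \<le> w k\<close> q(1) by (auto simp: v_def t_def)
    then have "descent ?q v"
      using ijk(2,3) by (simp add: descent_def)
    moreover have "?q ! Suc v < ?q ! t" "?q ! t < ?q ! v"
      "region n J (?q ! t) \<noteq> region n J (?q ! v)" "region n J (?q ! t) \<noteq> region n J (?q ! Suc v)"
      "region n J (?q ! Suc v) \<noteq> region n J (?q ! v)"
      using v(1-3) ijk(2,3,5-7) unfolding same_region_def by auto
    ultimately show "\<exists>v t. descent ?q v \<and> Suc v < t \<and> t < length ?q \<and> ?q ! Suc v < ?q ! t \<and>
      ?q ! t < ?q ! v \<and> region n J (?q ! t) \<noteq> region n J (?q ! v) \<and>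
      region n J (?q ! t) \<noteq> region n J (?q ! Suc v) \<and> region n J (?q ! Suc v) \<noteq> region n J (?q ! v)"
      using v(4,5) by blast
  qed
  then show ?thesis
    unfolding J_regions.avoids_312_def by blast
qed

lemma J231_avoiding_eq:
  "J231_avoiding n J = {w \<in> {w. w permutes {1..n}}.
     J_regions.region_sorted n J (inv_word n w) \<and> J_regions.avoids_312 n J (inv_word n w)}"
proof (intro set_eqI)
  fix w
  show "w \<in> J231_avoiding n J \<longleftrightarrow> w \<in> {w \<in> {w. w permutes {1..n}}.
     J_regions.region_sorted n J (inv_word n w) \<and> J_regions.avoids_312 n J (inv_word n w)}"
  proof (cases "w permutes {1..n}")
    case True
    then show ?thesis
      unfolding J231_avoiding_def parabolic_quotient_def
      using parabolic_iff_increasing_on_regions[of n J w] region_sorted_inv_word_iff[OF True]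
        avoids_312_inv_word_iff[OF True] by simp
  qed (simp add: J231_avoiding_def parabolic_quotient_def)
qed

lemma bij_betw_J231_avoiding_ballot_pairs:
  "bij_betw (\<lambda>w. arc_ends (descent_arcs (inv_word n w))) (J231_avoiding n J)
     (J_regions.ballot_pairs n J {1..n})"
proof -
  have "J_regions.avoiding_lists n J {1..n} = {q \<in> {q. distinct q \<and> set q = {1..n}}.
      J_regions.region_sorted n J q \<and> J_regions.avoids_312 n J q}"
    unfolding J_regions.avoiding_lists_def by blast
  then have "bij_betw (inv_word n) (J231_avoiding n J) (J_regions.avoiding_lists n J {1..n})"
    unfolding J231_avoiding_eq by (simp only: bij_betw_Collect[OF bij_betw_inv_word])
  from bij_betw_trans[OF this J_regions.bij_betw_arc_ends_avoiding_lists]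
  show ?thesis
    by (simp add: comp_def)
qed

lemma J_noncrossing_eq:
  "J_noncrossing n J = {P \<in> {P. partition_on {1..n} P}.
     J_regions.region_separated n J (bumps P) \<and> J_regions.noncrossing_arcs n J (bumps P)}"
proof (intro set_eqI)
  fix P
  show "P \<in> J_noncrossing n J \<longleftrightarrow> P \<in> {P \<in> {P. partition_on {1..n} P}.
     J_regions.region_separated n J (bumps P) \<and> J_regions.noncrossing_arcs n J (bumps P)}"
  proof (cases "partition_on {1..n} P")
    case True
    show ?thesis
      unfolding J_noncrossing_def mem_Collect_eq J_regions.noncrossing_arcs_iff bumps_iff
        J_regions.region_separated_bumps_iff[OF True] same_region_def
      by simp
  qed (simp add: J_noncrossing_def)
qed

lemma J_nonnesting_eq:
  "J_nonnesting n J = {P \<in> {P. partition_on {1..n} P}.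
     J_regions.region_separated n J (bumps P) \<and> nonnesting_arcs (bumps P)}"
proof (intro set_eqI)
  fix P
  show "P \<in> J_nonnesting n J \<longleftrightarrow> P \<in> {P \<in> {P. partition_on {1..n} P}.
     J_regions.region_separated n J (bumps P) \<and> nonnesting_arcs (bumps P)}"
  proof (cases "partition_on {1..n} P")
    case True
    show ?thesis
      unfolding J_nonnesting_def mem_Collect_eq nonnesting_arcs_iff bumps_iff
        J_regions.region_separated_bumps_iff[OF True] same_region_def
      by simp
  qed (simp add: J_nonnesting_def)
qed

lemma bij_betw_J_partitions_ballot_pairs:
  shows "bij_betw (\<lambda>P. arc_ends (bumps P)) (J_noncrossing n J) (J_regions.ballot_pairs n J {1..n})"
    and "bij_betw (\<lambda>P. arc_ends (bumps P)) (J_nonnesting n J) (J_regions.ballot_pairs n J {1..n})"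
proof -
  have "bij_betw bumps (J_noncrossing n J) {E \<in> {E. arc_diagram {1..n} E}.
      J_regions.region_separated n J E \<and> J_regions.noncrossing_arcs n J E}"
    unfolding J_noncrossing_eq by (rule bij_betw_Collect[OF bij_betw_bumps]) simp
  moreover have "{E \<in> {E. arc_diagram {1..n} E}.
      J_regions.region_separated n J E \<and> J_regions.noncrossing_arcs n J E} =
    {E. arc_diagram {1..n} E \<and> J_regions.region_separated n J E \<and> J_regions.noncrossing_arcs n J E}"
    by blast
  ultimately show "bij_betw (\<lambda>P. arc_ends (bumps P)) (J_noncrossing n J) (J_regions.ballot_pairs n J {1..n})"
    using bij_betw_trans J_regions.bij_betw_arc_ends_noncrossing[of "{1..n}" n J]
    by (fastforce simp: comp_def)
  have "bij_betw bumps (J_nonnesting n J) {E \<in> {E. arc_diagram {1..n} E}.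
      J_regions.region_separated n J E \<and> nonnesting_arcs E}"
    unfolding J_nonnesting_eq by (rule bij_betw_Collect[OF bij_betw_bumps]) simp
  moreover have "{E \<in> {E. arc_diagram {1..n} E}.
      J_regions.region_separated n J E \<and> nonnesting_arcs E} =
    {E. arc_diagram {1..n} E \<and> J_regions.region_separated n J E \<and> nonnesting_arcs E}"
    by blast
  ultimately show "bij_betw (\<lambda>P. arc_ends (bumps P)) (J_nonnesting n J) (J_regions.ballot_pairs n J {1..n})"
    using bij_betw_trans J_regions.bij_betw_arc_ends_nonnesting[of "{1..n}" n J]
    by (fastforce simp: comp_def)
qed

theorem theorem1p2:
  fixes n :: nat and J :: "nat set"
  assumes "n > 0" and "J \<subseteq> {1..<n}"
  shows "(\<exists>f. bij_betw f (J231_avoiding n J) (J_noncrossing n J)) \<and>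
         (\<exists>g. bij_betw g (J_noncrossing n J) (J_nonnesting n J)) \<and>
         card (J231_avoiding n J) = card (J_noncrossing n J) \<and>
         card (J_noncrossing n J) = card (J_nonnesting n J)"
proof -
  note avoiding = bij_betw_J231_avoiding_ballot_pairs[of n J]
  note noncrossing = bij_betw_J_partitions_ballot_pairs(1)[of n J]
  note nonnesting = bij_betw_J_partitions_ballot_pairs(2)[of n J]
  have f: "bij_betw (inv_into (J_noncrossing n J) (\<lambda>P. arc_ends (bumps P)) \<circ>
      (\<lambda>w. arc_ends (descent_arcs (inv_word n w)))) (J231_avoiding n J) (J_noncrossing n J)"
    using bij_betw_trans[OF avoiding bij_betw_inv_into[OF noncrossing]] .
  have g: "bij_betw (inv_into (J_nonnesting n J) (\<lambda>P. arc_ends (bumps P)) \<circ>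
      (\<lambda>P. arc_ends (bumps P))) (J_noncrossing n J) (J_nonnesting n J)"
    using bij_betw_trans[OF noncrossing bij_betw_inv_into[OF nonnesting]] .
  show ?thesis
    using f g bij_betw_same_card[OF f] bij_betw_same_card[OF g] by blast
qed

end
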